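(* Let $d\geq 2$. For every bounded convex $\mathcal{D}\subset\mathbb{R}^d$ with non-empty interior and every badly approximable $\alpha\in\mathbb{R}^d$, we have \[\sup_{R\geq 1} L(\alpha,R^{-1}\mathcal{D})<\infty .\]
   Context: $\alpha\in\mathbb{R}^d$ is badly approximable if there is $c>0$ such that $\|m\cdot\alpha\|_{\mathbb{R}/\mathbb{Z}}>c\|m\|^{-d}$ for all non-zero $m\in\mathbb{Z}^d$, where $\|x\|_{\mathbb{R}/\mathbb{Z}}$ is the distance from $x$ to the nearest integer. For a set $\mathcal{D}\subset\mathbb{R}^d$ and $q\in\mathcal{D}$, $\tau(q,\mathcal{D})=\min\{n\in\mathbb{N}^*\mid q+n\alpha\in\mathcal{D}+\mathbb{Z}^d\}$ with $\mathbb{N}^*=\{1,2,\ldots\}$, and $L(\alpha,\mathcal{D})$ is the number of distinct values of $\tau(q,\mathcal{D})$ as $q$ ranges over $\mathcal{D}$. $R^{-1}\mathcal{D}=\{R^{-1}x\mid x\in\mathcal{D}\}$. *)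

theory Defs
  imports "HOL-Analysis.Analysis"
begin

definition dist_Z :: "real \<Rightarrow> real" where
  "dist_Z x = \<bar>x - of_int (round x)\<bar>"

definition int_lattice :: "(real ^ 'd) set" where
  "int_lattice = {z. \<forall>i. z $ i \<in> \<int>}"

definition badly_approximable :: "real ^ 'd \<Rightarrow> bool" where
  "badly_approximable \<alpha> \<longleftrightarrow>
     (\<exists>c>0. \<forall>m\<in>int_lattice. m \<noteq> 0 \<longrightarrow>
        dist_Z (m \<bullet> \<alpha>) > c * norm m powi (- int CARD('d)))"

definition return_time :: "real ^ 'd \<Rightarrow> (real ^ 'd) set \<Rightarrow> real ^ 'd \<Rightarrow> nat" where
  "return_time \<alpha> D q =
     (LEAST n::nat. n \<ge> 1 \<and> q + of_nat n *\<^sub>R \<alpha> \<in> {x + z | x z. x \<in> D \<and> z \<in> int_lattice})"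

text \<open>The set of return-time values; L(alpha, D) is its cardinality.\<close>
definition return_times :: "real ^ 'd \<Rightarrow> (real ^ 'd) set \<Rightarrow> nat set" where
  "return_times \<alpha> D = return_time \<alpha> D ` D"

end

theory Submission
  imports Defs
begin

text \<open>
  If a set contains a ball of radius \<open>s \<le> 1\<close> and lies in the ball of radius \<open>b\<close> around \<open>0\<close>, two
  equidistribution estimates for the orbit \<open>n\<alpha>\<close> bound its number of distinct return times.
  An effective Kronecker theorem makes every orbit \<open>x + n\<alpha>\<close> come within \<open>r\<close> of \<open>\<int>\<^sup>d\<close> in every
  coordinate for some \<open>1 \<le> n \<le> C r\<^sup>-\<^sup>d\<close>, so all return times are at most \<open>C (d/s)\<^sup>d\<close>.
  A return time \<open>n\<close> also moves a point of the set to another one modulo \<open>\<int>\<^sup>d\<close>, so \<open>n\<alpha>\<close> is within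
  \<open>2b\<close> of \<open>\<int>\<^sup>d\<close>, and the number of \<open>m \<le> T\<close> with this property is \<open>O(T b\<^sup>d + 1)\<close>.
  Together there are \<open>O((b/s)\<^sup>d)\<close> return times, which is invariant under the scaling \<open>R\<^sup>-\<^sup>1 D\<close>.

  Both estimates compare sums over the double orbit \<open>x + (j + j' + 1)\<alpha>\<close>, \<open>j, j' < N\<close>, of
  products of Fejer kernels with \<open>N\<^sup>2\<close> times their means. Each non-zero frequency \<open>k\<close> contributes
  at most \<open>1 / \<parallel>k\<cdot>\<alpha>\<parallel>\<^sup>2\<close>, and since \<open>\<alpha>\<close> is badly approximable the numbers \<open>k\<cdot>\<alpha>\<close> for \<open>k\<close> in
  a box are well separated modulo \<open>1\<close>, which makes the total error independent of \<open>N\<close>.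
\<close>

lemma real_nat_ceiling_le: "0 \<le> x \<Longrightarrow> real (nat \<lceil>x\<rceil>) \<le> x + 1"
  using of_int_ceiling_le_add_one[of x] by simp

lemma real_nat_floor_ge: "2 \<le> x \<Longrightarrow> x / 2 \<le> real (nat \<lfloor>x\<rfloor>)"
  using real_of_int_floor_gt_diff_one[of x] by simp linarith

lemma dist_Z_le_half: "dist_Z x \<le> 1/2"
  unfolding dist_Z_def using of_int_round_ge[of x] of_int_round_le[of x] by linarith

lemma dist_Z_le: "dist_Z z \<le> \<bar>z - of_int m\<bar>"
  unfolding dist_Z_def by (rule round_diff_minimal)

lemma sin_ge_third:
  assumes "0 \<le> x" "x \<le> pi/2"
  shows "x/3 \<le> sin x"
proof -
  have "\<bar>sin x - (\<Sum>m<3. sin_coeff m * x ^ m)\<bar> \<le> inverse (fact 3) * \<bar>x\<bar> ^ 3"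
    by (rule Maclaurin_sin_bound)
  moreover have "(\<Sum>m<3. sin_coeff m * x ^ m) = x"
    by (simp add: numeral_3_eq_3 sin_coeff_def)
  moreover have "inverse (fact 3) * \<bar>x\<bar> ^ 3 = x^3/6"
  proof -
    have "(fact 3 :: real) = 6"
      by (simp add: numeral_3_eq_3)
    then show ?thesis
      using assms by (simp only: abs_of_nonneg divide_inverse mult.commute)
  qed
  ultimately have "x - x^3/6 \<le> sin x"
    by linarith
  moreover have "x^3/6 \<le> x * (2/3)"
  proof -
    have "x^2 \<le> (pi/2)^2"
      using assms by (intro power_mono) auto
    also have "\<dots> \<le> 2 * 2"
      unfolding power2_eq_square using pi_less_4 pi_gt3 by (intro mult_mono) auto
    finally have "x * x^2 \<le> x * 4"
      using assms by (intro mult_left_mono) auto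
    then show ?thesis
      by (simp add: power3_eq_cube power2_eq_square mult.assoc)
  qed
  ultimately show ?thesis
    by linarith
qed

lemma sin_pi_ge:
  assumes "0 \<le> u" "u \<le> 1/2"
  shows "u \<le> sin (pi * u)"
proof -
  have "pi * u / 3 \<le> sin (pi * u)"
    using assms by (intro sin_ge_third) auto
  moreover have "3 * u \<le> pi * u"
    using assms pi_gt3 by (intro mult_right_mono) auto
  ultimately show ?thesis
    by linarith
qed

lemma abs_sin_pi_ge:
  assumes "\<bar>u\<bar> \<le> 1/2"
  shows "\<bar>u\<bar> \<le> \<bar>sin (pi * u)\<bar>"
proof (cases "u \<ge> 0")
  case True
  then show ?thesis
    using sin_pi_ge[of u] assms by auto
next
  case False
  then have "- u \<le> sin (pi * (- u))"
    using assms by (intro sin_pi_ge) auto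
  then show ?thesis
    using False by simp
qed

lemma sum_inverse_square_atLeastAtMost_le: "X \<ge> 1 \<Longrightarrow> (\<Sum>m\<in>{1..X}. 1 / real m ^ 2) \<le> 2 - 1 / real X"
proof (induction X rule: dec_induct)
  case (step n)
  have "1 / real (Suc n) ^ 2 \<le> 1 / (real n * real (Suc n))"
    using step.hyps by (intro divide_left_mono) (auto simp: power2_eq_square)
  also have "\<dots> = 1 / real n - 1 / real (Suc n)"
    using step.hyps by (simp add: field_simps)
  finally show ?case
    using step.IH by (simp add: sum.cl_ivl_Suc)
qed simp

lemma sum_inverse_square_le_2:
  assumes "finite S" "0 \<notin> S"
  shows "(\<Sum>m\<in>S. 1 / real m ^ 2) \<le> 2"
proof (cases "S = {}")
  case False
  define X where "X = Max S"
  have "X \<in> S"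
    using assms False by (simp add: X_def)
  then have "X \<ge> 1"
    using assms by (cases X) auto
  have "S \<subseteq> {1..X}"
    using assms by (auto simp: X_def Suc_le_eq intro!: Nat.gr0I)
  then have "(\<Sum>m\<in>S. 1 / real m ^ 2) \<le> (\<Sum>m\<in>{1..X}. 1 / real m ^ 2)"
    by (intro sum_mono2) auto
  also have "\<dots> \<le> 2 - 1 / real X"
    using \<open>X \<ge> 1\<close> by (rule sum_inverse_square_atLeastAtMost_le)
  also have "\<dots> \<le> 2"
    by simp
  finally show ?thesis .
qed simp

text \<open>Rounding \<open>v k / \<sigma>\<close> down maps the points injectively to positive integers.\<close>
lemma sum_inverse_square_separated_pos:
  fixes v :: "'a \<Rightarrow> real"
  assumes "finite U" "\<sigma> > 0" and gt: "\<And>k. k \<in> U \<Longrightarrow> v k > \<sigma>"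
    and sep: "\<And>k k'. k \<in> U \<Longrightarrow> k' \<in> U \<Longrightarrow> k \<noteq> k' \<Longrightarrow> \<bar>v k - v k'\<bar> > \<sigma>"
  shows "(\<Sum>k\<in>U. 1 / v k ^ 2) \<le> 2 / \<sigma>^2"
proof -
  define g where "g k = nat \<lfloor>v k / \<sigma>\<rfloor>" for k
  have g1: "g k \<ge> 1" if "k \<in> U" for k
  proof -
    have "v k / \<sigma> > 1"
      using gt[OF that] assms(2) by (simp add: field_simps)
    then show ?thesis
      by (simp add: g_def) linarith
  qed
  have gle: "real (g k) * \<sigma> \<le> v k" if "k \<in> U" for k
  proof -
    have "real (g k) \<le> v k / \<sigma>"
      using gt[OF that] assms(2) by (simp add: g_def)
    then show ?thesis
      using assms(2) by (simp add: field_simps)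
  qed
  have "inj_on g U"
  proof (rule inj_onI)
    fix k k'
    assume k: "k \<in> U" "k' \<in> U" "g k = g k'"
    show "k = k'"
    proof (rule ccontr)
      assume "k \<noteq> k'"
      then have "\<bar>v k / \<sigma> - v k' / \<sigma>\<bar> > 1"
        using sep k assms(2) by (simp add: diff_divide_distrib[symmetric] abs_divide field_simps)
      moreover have "\<lfloor>v k / \<sigma>\<rfloor> = \<lfloor>v k' / \<sigma>\<rfloor>"
        using k g1[OF k(1)] g1[OF k(2)] by (simp add: g_def)
      ultimately show False
        by linarith
    qed
  qed
  have "(\<Sum>k\<in>U. 1 / v k ^ 2) \<le> (\<Sum>k\<in>U. (1/\<sigma>^2) * (1 / real (g k) ^ 2))"
  proof (intro sum_mono)
    fix k
    assume k: "k \<in> U"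
    have "0 < real (g k) * \<sigma>"
      using g1[OF k] assms(2) by simp
    then have "1 / v k ^ 2 \<le> 1 / (real (g k) * \<sigma>)^2"
      using gle[OF k] g1[OF k] by (intro divide_left_mono power_mono mult_pos_pos) auto
    then show "1 / v k ^ 2 \<le> (1/\<sigma>^2) * (1 / real (g k) ^ 2)"
      by (simp add: power_mult_distrib mult.commute)
  qed
  also have "\<dots> = (1/\<sigma>^2) * (\<Sum>m\<in>g ` U. 1 / real m ^ 2)"
    using \<open>inj_on g U\<close> by (simp add: sum_distrib_left sum.reindex)
  also have "\<dots> \<le> (1/\<sigma>^2) * 2"
    using g1 assms(1) by (intro mult_left_mono sum_inverse_square_le_2) (auto simp: image_iff Suc_le_eq)
  finally show ?thesis
    by simp
qed

lemma sum_inverse_square_separated: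
  fixes u :: "'a \<Rightarrow> real"
  assumes "finite U" "\<sigma> > 0" and gt: "\<And>k. k \<in> U \<Longrightarrow> \<bar>u k\<bar> > \<sigma>"
    and sep: "\<And>k k'. k \<in> U \<Longrightarrow> k' \<in> U \<Longrightarrow> k \<noteq> k' \<Longrightarrow> \<bar>u k - u k'\<bar> > \<sigma>"
  shows "(\<Sum>k\<in>U. 1 / u k ^ 2) \<le> 4 / \<sigma>^2"
proof -
  define Up where "Up = {k\<in>U. u k > 0}"
  define Um where "Um = {k\<in>U. u k < 0}"
  have "U = Up \<union> Um" "Up \<inter> Um = {}"
    using gt assms(2) by (force simp: Up_def Um_def)+
  then have "(\<Sum>k\<in>U. 1 / u k ^ 2) = (\<Sum>k\<in>Up. 1 / u k ^ 2) + (\<Sum>k\<in>Um. 1 / (- u k) ^ 2)"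
    using assms(1) by (simp add: sum.union_disjoint)
  also have "(\<Sum>k\<in>Up. 1 / u k ^ 2) \<le> 2 / \<sigma>^2"
  proof (rule sum_inverse_square_separated_pos)
    show "u k > \<sigma>" if "k \<in> Up" for k
      using gt[of k] that by (auto simp: Up_def)
  qed (use assms(1,2) sep in \<open>auto simp: Up_def\<close>)
  also have "(\<Sum>k\<in>Um. 1 / (- u k) ^ 2) \<le> 2 / \<sigma>^2"
  proof (rule sum_inverse_square_separated_pos)
    show "- u k > \<sigma>" if "k \<in> Um" for k
      using gt[of k] that by (auto simp: Um_def)
    show "\<bar>- u k - - u k'\<bar> > \<sigma>" if "k \<in> Um" "k' \<in> Um" "k \<noteq> k'" for k k'
      using sep[of k k'] that by (auto simp: Um_def abs_minus_commute)
  qed (use assms(1,2) in \<open>auto simp: Um_def\<close>)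
  finally show ?thesis
    by simp
qed

section \<open>The Fejer kernel\<close>

definition ecis :: "real \<Rightarrow> complex" where
  "ecis t = cis (2 * pi * t)"

lemma ecis_add: "ecis (a + b) = ecis a * ecis b"
  by (simp add: ecis_def cis_mult distrib_left)

lemma ecis_Ints: "k \<in> \<int> \<Longrightarrow> ecis k = 1"
  by (simp add: ecis_def)

lemma ecis_0 [simp]: "ecis 0 = 1"
  by (simp add: ecis_def)

lemma norm_ecis [simp]: "norm (ecis t) = 1"
  by (simp add: ecis_def)

lemma cnj_ecis: "cnj (ecis t) = ecis (- t)"
  by (simp add: ecis_def cis_cnj)

lemma ecis_power: "ecis t ^ n = ecis (real n * t)"
  by (induction n) (simp_all add: ecis_add[symmetric] algebra_simps)

lemma prod_ecis: "finite A \<Longrightarrow> (\<Prod>i\<in>A. ecis (f i)) = ecis (\<Sum>i\<in>A. f i)"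
  by (induction A rule: finite_induct) (simp_all add: ecis_add)

lemma ecis_diff_of_int: "ecis (t - of_int k) = ecis t"
  by (simp add: ecis_def cis_divide[symmetric] right_diff_distrib)

lemma norm_ecis_minus_1: "norm (ecis t - 1) = 2 * \<bar>sin (pi * t)\<bar>"
proof -
  have "ecis t - 1 = cis (pi * t) * (cis (pi * t) - cis (- (pi * t)))"
    by (simp add: ecis_def cis_mult algebra_simps)
  also have "cis (pi * t) - cis (- (pi * t)) = complex_of_real (2 * sin (pi * t)) * \<i>"
    by (simp add: complex_eq_iff)
  finally show ?thesis
    by (simp add: norm_mult)
qed

lemma norm_ecis_minus_1_ge: "2 * dist_Z t \<le> norm (ecis t - 1)"
proof -
  define u where "u = t - of_int (round t)"
  have "\<bar>u\<bar> \<le> 1/2"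
    using dist_Z_le_half[of t] by (simp add: u_def dist_Z_def)
  then have "\<bar>u\<bar> \<le> \<bar>sin (pi * u)\<bar>"
    by (rule abs_sin_pi_ge)
  moreover have "ecis t = ecis u"
    by (simp add: u_def ecis_diff_of_int)
  ultimately show ?thesis
    using norm_ecis_minus_1[of u] by (simp add: dist_Z_def u_def)
qed

lemma norm_sum_ecis_le: "norm (\<Sum>j<L. ecis (real j * t)) \<le> real L"
  using norm_sum[of "\<lambda>j. ecis (real j * t)" "{..<L}"] by simp

lemma norm_sum_ecis_le_inverse_dist_Z:
  assumes "dist_Z t > 0"
  shows "norm (\<Sum>j<L. ecis (real j * t)) \<le> 1 / dist_Z t"
proof -
  define z where "z = ecis t"
  have nz: "2 * dist_Z t \<le> norm (1 - z)"
    using norm_ecis_minus_1_ge[of t] by (simp add: z_def norm_minus_commute)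
  then have "z \<noteq> 1"
    using assms by auto
  then have "(\<Sum>j<L. ecis (real j * t)) = (1 - z^L) / (1 - z)"
    by (simp add: z_def ecis_power[symmetric] sum_gp_strict)
  moreover have "norm (1 - z^L) \<le> 2"
    using norm_triangle_ineq4[of 1 "z^L"] by (simp add: z_def norm_power)
  ultimately have "norm (\<Sum>j<L. ecis (real j * t)) \<le> 2 / norm (1 - z)"
    using nz assms by (simp add: norm_divide divide_right_mono)
  also have "\<dots> \<le> 2 / (2 * dist_Z t)"
    using nz assms by (intro divide_left_mono) (auto intro!: mult_pos_pos)
  finally show ?thesis
    by simp
qed

definition fejer :: "nat \<Rightarrow> real \<Rightarrow> real" where
  "fejer L t = (norm (\<Sum>j<L. ecis (real j * t)))^2 / real L"

lemma fejer_nonneg: "fejer L t \<ge> 0"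
  by (simp add: fejer_def)

lemma fejer_le: "fejer L t \<le> real L"
proof (cases "L = 0")
  case False
  have "(norm (\<Sum>j<L. ecis (real j * t)))^2 \<le> (real L)^2"
    using norm_sum_ecis_le by (intro power_mono) auto
  then show ?thesis
    using False by (simp add: fejer_def divide_le_eq power2_eq_square)
qed (simp add: fejer_def)

lemma fejer_le_inverse_dist_Z:
  assumes "dist_Z t > 0" "L > 0"
  shows "fejer L t \<le> 1 / (real L * dist_Z t ^ 2)"
proof -
  have "(norm (\<Sum>j<L. ecis (real j * t)))^2 \<le> (1 / dist_Z t)^2"
    using norm_sum_ecis_le_inverse_dist_Z[OF assms(1)] by (intro power_mono) auto
  then show ?thesis
    using assms by (simp add: fejer_def power_divide divide_simps)
qed

lemma fejer_Suc_0 [simp]: "fejer (Suc 0) t = 1"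
  by (simp add: fejer_def)

lemma fejer_ge_half:
  assumes "L \<ge> 1" "dist_Z t \<le> 1 / (8 * real L)"
  shows "real L / 2 \<le> fejer L t"
proof -
  define u where "u = t - of_int (round t)"
  have u: "\<bar>u\<bar> \<le> 1 / (8 * real L)"
    using assms by (simp add: u_def dist_Z_def)
  have cos_ge: "sqrt 2 / 2 \<le> cos (2 * pi * (real j * u))" if "j < L" for j
  proof -
    have "\<bar>real j * u\<bar> \<le> real L * (1 / (8 * real L))"
      using u that by (simp only: abs_mult abs_of_nat) (intro mult_mono, auto)
    also have "\<dots> = 1/8"
      using assms by simp
    finally have "\<bar>2 * pi * (real j * u)\<bar> \<le> pi/4"
      by (simp add: abs_mult)
    then have "cos (pi/4) \<le> cos \<bar>2 * pi * (real j * u)\<bar>"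
      by (intro cos_monotone_0_pi_le) auto
    then show ?thesis
      by (simp add: cos_45)
  qed
  have "(\<Sum>j<L. ecis (real j * t)) = (\<Sum>j<L. ecis (real j * u))"
  proof (intro sum.cong refl)
    fix j
    have "real j * t = real j * u + of_int (int j * round t)"
      by (simp add: u_def algebra_simps)
    then show "ecis (real j * t) = ecis (real j * u)"
      by (simp add: ecis_add ecis_Ints)
  qed
  then have "Re (\<Sum>j<L. ecis (real j * t)) = (\<Sum>j<L. cos (2 * pi * (real j * u)))"
    by (simp add: ecis_def)
  also have "\<dots> \<ge> real L * (sqrt 2 / 2)"
    using sum_mono[of "{..<L}" "\<lambda>_. sqrt 2 / 2"] cos_ge by simp
  finally have "real L * (sqrt 2 / 2) \<le> norm (\<Sum>j<L. ecis (real j * t))"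
    using complex_Re_le_cmod order_trans by blast
  then have "(real L * (sqrt 2 / 2))^2 \<le> (norm (\<Sum>j<L. ecis (real j * t)))^2"
    by (intro power_mono) auto
  moreover have "(real L * (sqrt 2 / 2))^2 = real L ^ 2 / 2"
    by (simp add: power_mult_distrib power_divide)
  ultimately have "real L ^ 2 / 2 \<le> (norm (\<Sum>j<L. ecis (real j * t)))^2"
    by linarith
  then show ?thesis
    using assms by (simp add: fejer_def divide_simps power2_eq_square)
qed

lemma fejer_expansion:
  "complex_of_real (fejer L t) =
     (\<Sum>p\<in>{..<L} \<times> {..<L}. complex_of_real (1 / real L) * ecis ((real (fst p) - real (snd p)) * t))"
proof -
  have "complex_of_real ((norm (\<Sum>j<L. ecis (real j * t)))^2) =
        (\<Sum>j<L. ecis (real j * t)) * cnj (\<Sum>j<L. ecis (real j * t))"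
    by (rule complex_norm_square)
  also have "\<dots> = (\<Sum>a<L. \<Sum>b<L. ecis (real a * t) * ecis (- (real b * t)))"
    by (simp add: sum_product cnj_ecis)
  also have "\<dots> = (\<Sum>p\<in>{..<L} \<times> {..<L}. ecis ((real (fst p) - real (snd p)) * t))"
    by (simp add: sum.cartesian_product ecis_add[symmetric] algebra_simps case_prod_beta)
  finally show ?thesis
    by (simp add: fejer_def sum_distrib_left[symmetric] divide_inverse mult.commute)
qed

text \<open>The quadruples \<open>((a, b), (a', b'))\<close> index the terms \<open>ecis ((a - b + a' - b') t)\<close> of the
  trigonometric polynomial \<open>fejer M t * fejer l t / l\<close>.\<close>
definition quad_index :: "nat \<Rightarrow> nat \<Rightarrow> ((nat \<times> nat) \<times> (nat \<times> nat)) set" where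
  "quad_index M l = ({..<M} \<times> {..<M}) \<times> ({..<l} \<times> {..<l})"

definition quad_freq :: "(nat \<times> nat) \<times> (nat \<times> nat) \<Rightarrow> int" where
  "quad_freq q = int (fst (fst q)) - int (snd (fst q)) + int (fst (snd q)) - int (snd (snd q))"

lemma finite_quad_index [simp]: "finite (quad_index M l)"
  by (simp add: quad_index_def)

lemma abs_quad_freq_le: "q \<in> quad_index M l \<Longrightarrow> l \<le> M \<Longrightarrow> \<bar>quad_freq q\<bar> \<le> int (2 * M)"
  by (auto simp: quad_index_def quad_freq_def)

lemma fejer_mult_expansion:
  "complex_of_real (fejer M t * fejer l t / real l) =
     (\<Sum>q\<in>quad_index M l. complex_of_real (1 / (real M * real l * real l)) * ecis (of_int (quad_freq q) * t))"
proof -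
  have "complex_of_real (fejer M t * fejer l t / real l) =
      complex_of_real (fejer M t) * complex_of_real (fejer l t) * complex_of_real (1 / real l)"
    by simp
  also have "\<dots> = (\<Sum>p\<in>{..<M}\<times>{..<M}. \<Sum>p'\<in>{..<l}\<times>{..<l}.
        complex_of_real (1 / real M) * ecis ((real (fst p) - real (snd p)) * t) *
        (complex_of_real (1 / real l) * ecis ((real (fst p') - real (snd p')) * t))) * complex_of_real (1 / real l)"
    unfolding fejer_expansion sum_product ..
  also have "\<dots> = (\<Sum>q\<in>quad_index M l. complex_of_real (1 / (real M * real l * real l)) * ecis (of_int (quad_freq q) * t))"
    unfolding quad_index_def sum.cartesian_product sum_distrib_right
    by (intro sum.cong refl) (auto simp: quad_freq_def ecis_add[symmetric] algebra_simps)
  finally show ?thesis .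
qed

lemma card_quad_freq_0_Suc_0: "card {q\<in>quad_index M (Suc 0). quad_freq q = 0} = M"
proof -
  have "{q\<in>quad_index M (Suc 0). quad_freq q = 0} = (\<lambda>a. ((a, a), (0, 0))) ` {..<M}"
    by (auto simp: quad_index_def quad_freq_def image_iff)
  then show ?thesis
    by (simp add: card_image inj_on_def)
qed

text \<open>Quadruples \<open>((b - a' + b', b), (a', b'))\<close> with \<open>L \<le> b < M - L\<close> have frequency \<open>0\<close>.\<close>
lemma card_quad_freq_0_ge:
  assumes "2 * L \<le> M"
  shows "real L * real L * (real M - 2 * real L) \<le> real (card {q\<in>quad_index M L. quad_freq q = 0})"
proof -
  define f where "f p = ((fst p - fst (snd p) + snd (snd p), fst p), snd p)" for p :: "nat \<times> nat \<times> nat"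
  define A where "A = {L..<M-L} \<times> ({..<L} \<times> {..<L})"
  have "f ` A \<subseteq> {q\<in>quad_index M L. quad_freq q = 0}"
    using assms by (auto simp: f_def A_def quad_index_def quad_freq_def)
  moreover have "inj_on f A"
    by (auto simp: f_def A_def inj_on_def)
  ultimately have "card A \<le> card {q\<in>quad_index M L. quad_freq q = 0}"
    by (metis (no_types, lifting) card_image card_mono finite_quad_index finite_subset mem_Collect_eq subsetI)
  moreover have "card A = (M - 2 * L) * (L * L)"
    by (simp add: A_def card_cartesian_product mult_2)
  ultimately have "real ((M - 2 * L) * (L * L)) \<le> real (card {q\<in>quad_index M L. quad_freq q = 0})"
    by (simp only: of_nat_le_iff)
  moreover have "real ((M - 2 * L) * (L * L)) = real L * real L * (real M - 2 * real L)"
    using assms by (simp add: of_nat_diff)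
  ultimately show ?thesis
    by linarith
qed

section \<open>Products of Fejer kernels\<close>

definition fejer_prod :: "nat \<Rightarrow> ('d::finite \<Rightarrow> nat) \<Rightarrow> real^'d \<Rightarrow> real" where
  "fejer_prod M l y = (\<Prod>i\<in>UNIV. fejer M (y$i) * fejer (l i) (y$i) / real (l i))"

definition fejer_prod_weight :: "nat \<Rightarrow> ('d::finite \<Rightarrow> nat) \<Rightarrow> real" where
  "fejer_prod_weight M l = (\<Prod>i\<in>UNIV. 1 / (real M * real (l i) * real (l i)))"

definition fejer_prod_index :: "nat \<Rightarrow> ('d::finite \<Rightarrow> nat) \<Rightarrow> ('d \<Rightarrow> (nat \<times> nat) \<times> (nat \<times> nat)) set" where
  "fejer_prod_index M l = PiE UNIV (\<lambda>i. quad_index M (l i))"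

definition freq_vector :: "('d \<Rightarrow> (nat \<times> nat) \<times> (nat \<times> nat)) \<Rightarrow> 'd \<Rightarrow> int" where
  "freq_vector \<tau> = (\<lambda>i. quad_freq (\<tau> i))"

text \<open>The mean value of \<open>fejer_prod M l\<close> over the torus, i.e. its constant Fourier coefficient.\<close>
definition fejer_prod_mean :: "nat \<Rightarrow> ('d::finite \<Rightarrow> nat) \<Rightarrow> real" where
  "fejer_prod_mean M l =
     fejer_prod_weight M l * real (card {\<tau>\<in>fejer_prod_index M l. freq_vector \<tau> = (\<lambda>_. 0)})"

lemma finite_fejer_prod_index [simp]: "finite (fejer_prod_index M l)"
  by (simp add: fejer_prod_index_def finite_PiE)

lemma fejer_prod_nonneg: "fejer_prod M l y \<ge> 0"
  by (simp add: fejer_prod_def prod_nonneg fejer_nonneg)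

lemma fejer_prod_expansion:
  "complex_of_real (fejer_prod M l y) =
     (\<Sum>\<tau>\<in>fejer_prod_index M l. complex_of_real (fejer_prod_weight M l) *
        ecis (\<Sum>i\<in>UNIV. of_int (freq_vector \<tau> i) * y$i))"
proof -
  have "complex_of_real (fejer_prod M l y) =
      (\<Prod>i\<in>UNIV. complex_of_real (fejer M (y$i) * fejer (l i) (y$i) / real (l i)))"
    unfolding fejer_prod_def by (rule of_real_prod)
  also have "\<dots> = (\<Prod>i\<in>UNIV. \<Sum>q\<in>quad_index M (l i).
      complex_of_real (1 / (real M * real (l i) * real (l i))) * ecis (of_int (quad_freq q) * y$i))"
    by (simp only: fejer_mult_expansion)
  also have "\<dots> = (\<Sum>\<tau>\<in>fejer_prod_index M l. \<Prod>i\<in>UNIV.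
      complex_of_real (1 / (real M * real (l i) * real (l i))) * ecis (of_int (quad_freq (\<tau> i)) * y$i))"
    unfolding fejer_prod_index_def by (rule prod_sum_PiE) auto
  also have "\<dots> = (\<Sum>\<tau>\<in>fejer_prod_index M l. complex_of_real (fejer_prod_weight M l) *
      ecis (\<Sum>i\<in>UNIV. of_int (freq_vector \<tau> i) * y$i))"
    by (intro sum.cong refl)
      (simp only: prod.distrib prod_ecis[OF finite_class.finite] fejer_prod_weight_def
        of_real_prod freq_vector_def)
  finally show ?thesis .
qed

text \<open>A frequency vector and the entries \<open>b, a', b'\<close> of each quadruple determine the
  remaining entries \<open>a\<close>, so every Fourier coefficient is at most \<open>1\<close>.\<close>
lemma fejer_prod_weight_mult_card_le_1:
  assumes "M \<ge> 1" "\<And>i. l i \<ge> 1"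
  shows "fejer_prod_weight M l * real (card {\<tau>\<in>fejer_prod_index M l. freq_vector \<tau> = k}) \<le> 1"
proof -
  define proj where "proj \<tau> = (\<lambda>i. (snd (fst (\<tau> i)), snd (\<tau> i)))"
    for \<tau> :: "'a \<Rightarrow> (nat \<times> nat) \<times> (nat \<times> nat)"
  define R where "R = PiE UNIV (\<lambda>i. {..<M} \<times> ({..<l i} \<times> {..<l i}))"
  have "inj_on proj {\<tau>\<in>fejer_prod_index M l. freq_vector \<tau> = k}"
  proof (rule inj_onI)
    fix \<tau> \<tau>'
    assume \<tau>: "\<tau> \<in> {\<tau>\<in>fejer_prod_index M l. freq_vector \<tau> = k}"
      "\<tau>' \<in> {\<tau>\<in>fejer_prod_index M l. freq_vector \<tau> = k}" "proj \<tau> = proj \<tau>'"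
    show "\<tau> = \<tau>'"
    proof
      fix i
      have p: "snd (fst (\<tau> i)) = snd (fst (\<tau>' i))" "snd (\<tau> i) = snd (\<tau>' i)"
        using \<tau>(3) by (auto simp: proj_def fun_eq_iff)
      have "freq_vector \<tau> = freq_vector \<tau>'"
        using \<tau>(1,2) by simp
      then have "quad_freq (\<tau> i) = quad_freq (\<tau>' i)"
        by (simp add: freq_vector_def fun_eq_iff)
      then have "fst (fst (\<tau> i)) = fst (fst (\<tau>' i))"
        using p by (simp add: quad_freq_def)
      then show "\<tau> i = \<tau>' i"
        using p by (simp add: prod_eq_iff)
    qed
  qed
  moreover have "proj ` {\<tau>\<in>fejer_prod_index M l. freq_vector \<tau> = k} \<subseteq> R"
  proof
    fix y
    assume "y \<in> proj ` {\<tau>\<in>fejer_prod_index M l. freq_vector \<tau> = k}"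
    then obtain \<tau> where \<tau>: "\<tau> \<in> fejer_prod_index M l" "y = proj \<tau>"
      by auto
    then have "\<tau> i \<in> quad_index M (l i)" for i
      by (auto simp: fejer_prod_index_def PiE_def Pi_def)
    then have "proj \<tau> i \<in> {..<M} \<times> ({..<l i} \<times> {..<l i})" for i
      unfolding proj_def quad_index_def by (simp add: mem_Times_iff)
    then show "y \<in> R"
      using \<tau>(2) by (auto simp: R_def PiE_def Pi_def)
  qed
  ultimately have "card {\<tau>\<in>fejer_prod_index M l. freq_vector \<tau> = k} \<le> card R"
    by (auto simp: R_def finite_PiE card_image[symmetric] intro: card_mono)
  then have "real (card {\<tau>\<in>fejer_prod_index M l. freq_vector \<tau> = k}) \<le> real (card R)"
    by (simp only: of_nat_le_iff)
  also have "real (card R) = (\<Prod>i\<in>UNIV. real M * real (l i) * real (l i))"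
    by (simp add: R_def card_PiE card_cartesian_product mult.assoc)
  finally have "real (card {\<tau>\<in>fejer_prod_index M l. freq_vector \<tau> = k}) \<le>
      (\<Prod>i\<in>UNIV. real M * real (l i) * real (l i))" .
  then have "fejer_prod_weight M l * real (card {\<tau>\<in>fejer_prod_index M l. freq_vector \<tau> = k}) \<le>
      fejer_prod_weight M l * (\<Prod>i\<in>UNIV. real M * real (l i) * real (l i))"
    by (intro mult_left_mono) (auto simp: fejer_prod_weight_def intro!: prod_nonneg)
  also have "\<dots> = 1"
    using assms by (simp add: fejer_prod_weight_def prod_dividef Suc_le_eq)
  finally show ?thesis .
qed

lemma fejer_prod_mean_le_1: "M \<ge> 1 \<Longrightarrow> (\<And>i. l i \<ge> 1) \<Longrightarrow> fejer_prod_mean M l \<le> 1"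
  unfolding fejer_prod_mean_def by (rule fejer_prod_weight_mult_card_le_1)

lemma fejer_prod_mean_eq:
  "fejer_prod_mean M l =
     (\<Prod>i\<in>UNIV. real (card {q\<in>quad_index M (l i). quad_freq q = 0}) / (real M * real (l i) * real (l i)))"
proof -
  have "{\<tau>\<in>fejer_prod_index M l. freq_vector \<tau> = (\<lambda>_. 0)} =
      PiE UNIV (\<lambda>i. {q\<in>quad_index M (l i). quad_freq q = 0})"
    by (auto simp: fejer_prod_index_def freq_vector_def PiE_def Pi_def fun_eq_iff)
  then have "card {\<tau>\<in>fejer_prod_index M l. freq_vector \<tau> = (\<lambda>_. 0)} =
      (\<Prod>i\<in>UNIV. card {q\<in>quad_index M (l i). quad_freq q = 0})"
    by (simp add: card_PiE)
  then show ?thesis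
    by (simp add: fejer_prod_mean_def fejer_prod_weight_def prod.distrib[symmetric] divide_inverse ac_simps)
qed

lemma fejer_prod_const_1: "fejer_prod M (\<lambda>_. 1) y = (\<Prod>i\<in>UNIV. fejer M (y$i))"
  by (simp add: fejer_prod_def)

lemma fejer_prod_upd:
  "fejer_prod M ((\<lambda>_. 1)(i := L)) y = fejer_prod M (\<lambda>_. 1) y * (fejer L (y$i) / real L)"
proof -
  have "fejer_prod M ((\<lambda>_. 1)(i := L)) y =
      (\<Prod>i'\<in>UNIV. fejer M (y$i') * (if i' = i then fejer L (y$i) / real L else 1))"
    unfolding fejer_prod_def by (intro prod.cong refl) auto
  also have "\<dots> = (\<Prod>i'\<in>UNIV. fejer M (y$i')) * (fejer L (y$i) / real L)"
    by (simp add: prod.distrib prod.delta)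
  finally show ?thesis
    by (simp only: fejer_prod_const_1)
qed

lemma fejer_prod_mean_upd_ge:
  assumes "L \<ge> 1" "2 * L \<le> M"
  shows "1 - 2 * real L / real M \<le> fejer_prod_mean M ((\<lambda>_. 1)(i := L))"
proof -
  have M: "M \<ge> 1"
    using assms by simp
  have "fejer_prod_mean M ((\<lambda>_. 1)(i := L)) =
      (\<Prod>i'\<in>UNIV. if i' = i then real (card {q\<in>quad_index M L. quad_freq q = 0}) / (real M * real L * real L) else 1)"
    unfolding fejer_prod_mean_eq using M by (intro prod.cong refl) (auto simp: card_quad_freq_0_Suc_0)
  also have "\<dots> = real (card {q\<in>quad_index M L. quad_freq q = 0}) / (real M * real L * real L)"
    by (simp add: prod.delta)
  also have "\<dots> \<ge> real L * real L * (real M - 2 * real L) / (real M * real L * real L)"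
    using card_quad_freq_0_ge[OF assms(2)] M assms(1) by (intro divide_right_mono) auto
  also have "real L * real L * (real M - 2 * real L) / (real M * real L * real L) = 1 - 2 * real L / real M"
    using M assms(1) by (simp add: field_simps)
  finally show ?thesis .
qed

lemma fejer_prod_ge:
  assumes "M \<ge> 1" "\<And>i. dist_Z (z$i) \<le> 1 / (8 * real M)"
  shows "(real M / 2) ^ CARD('d) \<le> fejer_prod M (\<lambda>_. 1) (z :: real^'d::finite)"
proof -
  have "(\<Prod>i\<in>(UNIV::'d set). real M / 2) \<le> (\<Prod>i\<in>UNIV. fejer M (z$i))"
    using assms by (intro prod_mono conjI fejer_ge_half) auto
  then show ?thesis
    unfolding fejer_prod_const_1 by simp
qed

section \<open>Badly approximable vectors\<close>

definition badly_approximable_with :: "real \<Rightarrow> real^'d \<Rightarrow> bool" where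
  "badly_approximable_with c \<alpha> \<longleftrightarrow>
     (\<forall>m\<in>int_lattice. m \<noteq> 0 \<longrightarrow> dist_Z (m \<bullet> \<alpha>) > c * norm m powi (- int CARD('d)))"

lemma badly_approximable_iff: "badly_approximable \<alpha> \<longleftrightarrow> (\<exists>c>0. badly_approximable_with c \<alpha>)"
  by (simp add: badly_approximable_def badly_approximable_with_def)

definition int_dot :: "real^'d \<Rightarrow> ('d::finite \<Rightarrow> int) \<Rightarrow> real" where
  "int_dot \<alpha> k = (\<Sum>i\<in>UNIV. of_int (k i) * \<alpha>$i)"

definition int_box :: "nat \<Rightarrow> ('d \<Rightarrow> int) set" where
  "int_box K = {k. \<forall>i. \<bar>k i\<bar> \<le> int K}"

lemma finite_int_box: "finite (int_box K :: ('d::finite \<Rightarrow> int) set)"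
proof -
  have "\<bar>a\<bar> \<le> int K \<longleftrightarrow> a \<in> {-int K..int K}" for a
    by auto
  then have "int_box K = PiE UNIV (\<lambda>_::'d. {-int K..int K})"
    by (simp add: int_box_def PiE_def extensional_def Pi_def)
  then show ?thesis
    by (simp add: finite_PiE)
qed

lemma int_dot_diff: "int_dot \<alpha> (\<lambda>i. k i - k' i) = int_dot \<alpha> k - int_dot \<alpha> k'"
  by (simp add: int_dot_def algebra_simps sum_subtractf)

lemma dist_Z_int_dot_gt:
  fixes \<alpha> :: "real^'d::finite"
  assumes "badly_approximable_with c \<alpha>" "c > 0" "k \<noteq> (\<lambda>_. 0)" "\<And>i. \<bar>k i\<bar> \<le> int K"
  shows "c / (real CARD('d) * real K) ^ CARD('d) < dist_Z (int_dot \<alpha> k)"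
proof -
  define m :: "real^'d" where "m = (\<chi> i. of_int (k i))"
  obtain i0 where "k i0 \<noteq> 0"
    using assms(3) by auto
  then have "K > 0"
    using assms(4)[of i0] by (cases K) auto
  have "m \<in> int_lattice"
    by (simp add: m_def int_lattice_def)
  have "m \<noteq> 0"
    using \<open>k i0 \<noteq> 0\<close> by (metis m_def of_int_eq_0_iff vec_lambda_beta zero_index)
  have "norm m \<le> (\<Sum>i\<in>UNIV. \<bar>m$i\<bar>)"
    by (rule norm_le_l1_cart)
  also have "\<dots> \<le> (\<Sum>i\<in>(UNIV::'d set). real K)"
  proof (intro sum_mono)
    fix i
    have "real_of_int \<bar>k i\<bar> \<le> real_of_int (int K)"
      using assms(4)[of i] by (simp only: of_int_le_iff)
    then show "\<bar>m$i\<bar> \<le> real K"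
      by (simp add: m_def)
  qed
  finally have "norm m \<le> real CARD('d) * real K"
    by simp
  then have "c / (real CARD('d) * real K) ^ CARD('d) \<le> c / norm m ^ CARD('d)"
    using \<open>m \<noteq> 0\<close> assms(2) \<open>K > 0\<close> by (intro divide_left_mono power_mono mult_pos_pos zero_less_power) auto
  also have "\<dots> = c * norm m powi (- int CARD('d))"
    by (simp add: power_int_minus divide_inverse)
  also have "\<dots> < dist_Z (m \<bullet> \<alpha>)"
    using assms(1) \<open>m \<in> int_lattice\<close> \<open>m \<noteq> 0\<close> by (auto simp: badly_approximable_with_def)
  also have "m \<bullet> \<alpha> = int_dot \<alpha> k"
    by (simp add: m_def int_dot_def inner_vec_def)
  finally show ?thesis .
qed

text \<open>Distinct frequencies in the box give values \<open>int_dot \<alpha> k\<close> that are \<open>\<sigma>\<close>-separated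
  modulo \<open>1\<close>, since their differences are themselves frequencies in the doubled box.\<close>
lemma sum_inverse_dist_Z_square_int_box:
  fixes \<alpha> :: "real^'d::finite"
  assumes "badly_approximable_with c \<alpha>" "c > 0" "K \<ge> 1"
  shows "(\<Sum>k\<in>int_box K - {\<lambda>_. 0}. 1 / dist_Z (int_dot \<alpha> k) ^ 2) \<le>
           4 * (2 * real CARD('d) * real K) ^ (2 * CARD('d)) / c^2"
proof -
  define \<sigma> where "\<sigma> = c / (real CARD('d) * real (2 * K)) ^ CARD('d)"
  define u where "u k = int_dot \<alpha> k - of_int (round (int_dot \<alpha> k))" for k
  have "\<sigma> > 0"
    using assms by (simp add: \<sigma>_def)
  have dist_u: "\<bar>u k\<bar> = dist_Z (int_dot \<alpha> k)" for k
    by (simp add: u_def dist_Z_def)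
  have "(\<Sum>k\<in>int_box K - {\<lambda>_. 0}. 1 / u k ^ 2) \<le> 4 / \<sigma>^2"
  proof (rule sum_inverse_square_separated)
    show "finite (int_box K - {\<lambda>_. 0} :: ('d \<Rightarrow> int) set)"
      by (simp add: finite_int_box)
    show "\<bar>u k\<bar> > \<sigma>" if "k \<in> int_box K - {\<lambda>_. 0}" for k
      unfolding dist_u \<sigma>_def using that assms
      by (intro dist_Z_int_dot_gt) (auto simp: int_box_def intro: order_trans)
    show "\<bar>u k - u k'\<bar> > \<sigma>"
      if "k \<in> int_box K - {\<lambda>_. 0}" "k' \<in> int_box K - {\<lambda>_. 0}" "k \<noteq> k'" for k k'
    proof -
      have "\<sigma> < dist_Z (int_dot \<alpha> (\<lambda>i. k i - k' i))"
        unfolding \<sigma>_def using assms(1,2)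
      proof (rule dist_Z_int_dot_gt)
        show "(\<lambda>i. k i - k' i) \<noteq> (\<lambda>_. 0)"
          using that(3) by (auto simp: fun_eq_iff)
        show "\<bar>k i - k' i\<bar> \<le> int (2 * K)" for i
          using that(1,2) by (auto simp: int_box_def abs_le_iff) (smt (verit))+
      qed
      also have "\<dots> \<le> \<bar>u k - u k'\<bar>"
        using dist_Z_le[of "int_dot \<alpha> (\<lambda>i. k i - k' i)" "round (int_dot \<alpha> k) - round (int_dot \<alpha> k')"]
        by (simp add: int_dot_diff u_def algebra_simps)
      finally show ?thesis .
    qed
  qed (use \<open>\<sigma> > 0\<close> in simp)
  also have "4 / \<sigma>^2 = 4 * (2 * real CARD('d) * real K) ^ (2 * CARD('d)) / c^2"
    by (simp add: \<sigma>_def power_divide power_mult_distrib power_mult field_simps)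
  finally show ?thesis
    by (simp add: dist_u[symmetric])
qed

section \<open>Orbit sums\<close>

definition orbit_sum :: "(real^'d \<Rightarrow> real) \<Rightarrow> nat \<Rightarrow> real^'d \<Rightarrow> real^'d \<Rightarrow> real" where
  "orbit_sum f N x \<alpha> = (\<Sum>j<N. \<Sum>j'<N. f (x + real (j + j' + 1) *\<^sub>R \<alpha>))"

lemma orbit_sum_add: "orbit_sum (\<lambda>y. f y + g y) N x \<alpha> = orbit_sum f N x \<alpha> + orbit_sum g N x \<alpha>"
  by (simp add: orbit_sum_def sum.distrib)

lemma orbit_sum_cmult: "orbit_sum (\<lambda>y. a * f y) N x \<alpha> = a * orbit_sum f N x \<alpha>"
  by (simp add: orbit_sum_def sum_distrib_left)

lemma orbit_sum_sum: "orbit_sum (\<lambda>y. \<Sum>i\<in>I. f i y) N x \<alpha> = (\<Sum>i\<in>I. orbit_sum (f i) N x \<alpha>)"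
  unfolding orbit_sum_def by (simp only: sum.swap[of _ I])

lemma double_sum_ecis:
  "(\<Sum>j<N. \<Sum>j'<N. ecis (a + real (j + j' + 1) * \<theta>)) = ecis (a + \<theta>) * (\<Sum>j<N. ecis (real j * \<theta>))^2"
proof -
  have "(\<Sum>j<N. \<Sum>j'<N. ecis (a + real (j + j' + 1) * \<theta>)) =
      (\<Sum>j<N. \<Sum>j'<N. ecis (a + \<theta>) * (ecis (real j * \<theta>) * ecis (real j' * \<theta>)))"
    by (intro sum.cong refl) (simp add: ecis_add[symmetric] algebra_simps)
  also have "\<dots> = ecis (a + \<theta>) * (\<Sum>j<N. \<Sum>j'<N. ecis (real j * \<theta>) * ecis (real j' * \<theta>))"
    by (simp only: sum_distrib_left)
  also have "\<dots> = ecis (a + \<theta>) * (\<Sum>j<N. ecis (real j * \<theta>))^2"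
    unfolding power2_eq_square sum_product ..
  finally show ?thesis .
qed

text \<open>Summing over the double orbit turns the contribution of a frequency \<open>k\<close> into
  \<open>|\<Sum>j<N. ecis (j \<cdot> int_dot \<alpha> k)|\<^sup>2 \<le> 1 / dist_Z (int_dot \<alpha> k)\<^sup>2\<close>, uniformly in \<open>N\<close>.\<close>
lemma orbit_sum_trig_poly:
  fixes f :: "real^'d::finite \<Rightarrow> real" and \<kappa> :: "'t \<Rightarrow> 'd \<Rightarrow> int"
  assumes "finite T" "W \<ge> 0"
    and f: "\<And>y. complex_of_real (f y) = (\<Sum>\<tau>\<in>T. complex_of_real W * ecis (\<Sum>i\<in>UNIV. of_int (\<kappa> \<tau> i) * y$i))"
    and mult: "\<And>k. W * real (card {\<tau>\<in>T. \<kappa> \<tau> = k}) \<le> B"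
    and dist_pos: "\<And>\<tau>. \<tau> \<in> T \<Longrightarrow> \<kappa> \<tau> \<noteq> (\<lambda>_. 0) \<Longrightarrow> dist_Z (int_dot \<alpha> (\<kappa> \<tau>)) > 0"
  shows "\<bar>orbit_sum f N x \<alpha> - real N ^ 2 * W * real (card {\<tau>\<in>T. \<kappa> \<tau> = (\<lambda>_. 0)})\<bar>
           \<le> B * (\<Sum>k\<in>\<kappa> ` T - {\<lambda>_. 0}. 1 / dist_Z (int_dot \<alpha> k) ^ 2)"
proof -
  define th where "th \<tau> = int_dot \<alpha> (\<kappa> \<tau>)" for \<tau>
  define A where "A \<tau> = ecis (int_dot x (\<kappa> \<tau>) + th \<tau>) * (\<Sum>j<N. ecis (real j * th \<tau>))^2" for \<tau>
  define T0 where "T0 = {\<tau>\<in>T. \<kappa> \<tau> = (\<lambda>_. 0)}"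
  define T1 where "T1 = {\<tau>\<in>T. \<kappa> \<tau> \<noteq> (\<lambda>_. 0)}"
  have "(\<Sum>i\<in>UNIV. of_int (\<kappa> \<tau> i) * (x + real n *\<^sub>R \<alpha>)$i) = int_dot x (\<kappa> \<tau>) + real n * th \<tau>" for \<tau> n
    by (simp add: th_def int_dot_def algebra_simps sum.distrib sum_distrib_left)
  then have "complex_of_real (orbit_sum f N x \<alpha>) = (\<Sum>\<tau>\<in>T. complex_of_real W * A \<tau>)"
    unfolding orbit_sum_def of_real_sum f A_def double_sum_ecis[symmetric] sum_distrib_left
    by (simp only: sum.swap[of _ T])
  also have "\<dots> = (\<Sum>\<tau>\<in>T0. complex_of_real W * A \<tau>) + (\<Sum>\<tau>\<in>T1. complex_of_real W * A \<tau>)"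
    using assms(1) by (subst sum.union_disjoint[symmetric]) (auto simp: T0_def T1_def intro: sum.cong)
  also have "(\<Sum>\<tau>\<in>T0. complex_of_real W * A \<tau>) = complex_of_real (real N ^ 2 * W * real (card T0))"
    by (simp add: T0_def A_def th_def int_dot_def)
  finally have "\<bar>orbit_sum f N x \<alpha> - real N ^ 2 * W * real (card T0)\<bar> =
      norm (\<Sum>\<tau>\<in>T1. complex_of_real W * A \<tau>)"
    by (metis add_diff_cancel_left' norm_of_real of_real_diff)
  also have "\<dots> \<le> (\<Sum>\<tau>\<in>T1. W * (1 / dist_Z (th \<tau>) ^ 2))"
  proof (intro order_trans[OF norm_sum] sum_mono)
    fix \<tau>
    assume "\<tau> \<in> T1"
    then have "dist_Z (th \<tau>) > 0"
      using dist_pos by (auto simp: T1_def th_def)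
    then have "(norm (\<Sum>j<N. ecis (real j * th \<tau>)))^2 \<le> (1 / dist_Z (th \<tau>))^2"
      using norm_sum_ecis_le_inverse_dist_Z by (intro power_mono) auto
    then have "W * (norm (\<Sum>j<N. ecis (real j * th \<tau>)))^2 \<le> W * (1 / dist_Z (th \<tau>))^2"
      using assms(2) by (rule mult_left_mono)
    then show "norm (complex_of_real W * A \<tau>) \<le> W * (1 / dist_Z (th \<tau>) ^ 2)"
      using assms(2) by (simp add: A_def norm_mult norm_power power_divide)
  qed
  also have "\<dots> = (\<Sum>k\<in>\<kappa> ` T1. W * real (card {\<tau>\<in>T. \<kappa> \<tau> = k}) * (1 / dist_Z (int_dot \<alpha> k) ^ 2))"
  proof -
    have "{\<tau>\<in>T1. \<kappa> \<tau> = k} = {\<tau>\<in>T. \<kappa> \<tau> = k}" if "k \<in> \<kappa> ` T1" for k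
      using that by (auto simp: T1_def)
    then show ?thesis
      using assms(1) by (subst sum.image_gen[of T1]) (auto simp: T1_def th_def intro!: sum.cong)
  qed
  also have "\<dots> \<le> (\<Sum>k\<in>\<kappa> ` T1. B * (1 / dist_Z (int_dot \<alpha> k) ^ 2))"
    using mult by (intro sum_mono mult_right_mono) auto
  also have "\<kappa> ` T1 = \<kappa> ` T - {\<lambda>_. 0}"
    by (auto simp: T1_def)
  finally show ?thesis
    by (simp add: T0_def sum_distrib_left)
qed

lemma orbit_sum_fejer_prod:
  fixes \<alpha> :: "real^'d::finite"
  assumes "badly_approximable_with c \<alpha>" "c > 0" "M \<ge> 1" "\<And>i. l i \<ge> 1" "\<And>i. l i \<le> M"
  shows "\<bar>orbit_sum (fejer_prod M l) N x \<alpha> - real N ^ 2 * fejer_prod_mean M l\<bar>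
           \<le> 4 * (4 * real CARD('d) * real M) ^ (2 * CARD('d)) / c^2"
proof -
  have box: "freq_vector \<tau> \<in> int_box (2 * M)" if "\<tau> \<in> fejer_prod_index M l" for \<tau>
  proof -
    have "\<tau> i \<in> quad_index M (l i)" for i
      using that by (auto simp: fejer_prod_index_def PiE_def Pi_def)
    then have "\<bar>quad_freq (\<tau> i)\<bar> \<le> int (2 * M)" for i
      using abs_quad_freq_le assms(5) by blast
    then show ?thesis
      by (simp add: int_box_def freq_vector_def)
  qed
  have "\<bar>orbit_sum (fejer_prod M l) N x \<alpha> - real N ^ 2 * fejer_prod_mean M l\<bar>
      \<le> 1 * (\<Sum>k\<in>freq_vector ` fejer_prod_index M l - {\<lambda>_. 0}. 1 / dist_Z (int_dot \<alpha> k) ^ 2)"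
    unfolding fejer_prod_mean_def mult.assoc[symmetric]
  proof (rule orbit_sum_trig_poly)
    show "fejer_prod_weight M l \<ge> 0"
      by (auto simp: fejer_prod_weight_def intro!: prod_nonneg)
    show "fejer_prod_weight M l * real (card {\<tau>\<in>fejer_prod_index M l. freq_vector \<tau> = k}) \<le> 1" for k
      using assms(3,4) by (rule fejer_prod_weight_mult_card_le_1)
    show "dist_Z (int_dot \<alpha> (freq_vector \<tau>)) > 0"
      if "\<tau> \<in> fejer_prod_index M l" "freq_vector \<tau> \<noteq> (\<lambda>_. 0)" for \<tau>
    proof -
      have "c / (real CARD('d) * real (2 * M)) ^ CARD('d) < dist_Z (int_dot \<alpha> (freq_vector \<tau>))"
        using box[OF that(1)] that(2) assms(1,2) by (intro dist_Z_int_dot_gt) (auto simp: int_box_def)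
      moreover have "c / (real CARD('d) * real (2 * M)) ^ CARD('d) > 0"
        using assms(2,3) by simp
      ultimately show ?thesis
        by linarith
    qed
  qed (simp_all add: fejer_prod_expansion)
  also have "\<dots> \<le> (\<Sum>k\<in>int_box (2 * M) - {\<lambda>_. 0}. 1 / dist_Z (int_dot \<alpha> k) ^ 2)"
    using box by (simp only: mult_1) (intro sum_mono2, auto simp: finite_int_box)
  also have "\<dots> \<le> 4 * (2 * real CARD('d) * real (2 * M)) ^ (2 * CARD('d)) / c^2"
    using assms(1-3) by (intro sum_inverse_dist_Z_square_int_box) auto
  finally show ?thesis
    by (simp add: mult.assoc)
qed

lemma orbit_sum_fejer_prod_const_le:
  fixes \<alpha> :: "real^'d::finite"
  assumes "badly_approximable_with c \<alpha>" "c > 0" "M \<ge> 1"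
  shows "orbit_sum (fejer_prod M (\<lambda>_. 1)) N x \<alpha>
           \<le> real N ^ 2 + 4 * (4 * real CARD('d) * real M) ^ (2 * CARD('d)) / c^2"
proof -
  have "fejer_prod_mean M (\<lambda>_::'d. 1) \<le> 1"
    using assms(3) by (intro fejer_prod_mean_le_1) auto
  then have "real N ^ 2 * fejer_prod_mean M (\<lambda>_::'d. 1) \<le> real N ^ 2"
    by (simp add: mult_left_le)
  then show ?thesis
    using orbit_sum_fejer_prod[OF assms, of "\<lambda>_. 1" N x] assms(3) by simp
qed

lemma orbit_sum_fejer_prod_upd_ge:
  fixes \<alpha> :: "real^'d::finite"
  assumes "badly_approximable_with c \<alpha>" "c > 0" "L \<ge> 1" "2 * L \<le> M"
  shows "real N ^ 2 * (1 - 2 * real L / real M) - 4 * (4 * real CARD('d) * real M) ^ (2 * CARD('d)) / c^2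
           \<le> orbit_sum (fejer_prod M ((\<lambda>_. 1)(i := L))) N x \<alpha>"
proof -
  have "real N ^ 2 * (1 - 2 * real L / real M) \<le> real N ^ 2 * fejer_prod_mean M ((\<lambda>_::'d. 1)(i := L))"
    using fejer_prod_mean_upd_ge[OF assms(3,4)] by (intro mult_left_mono) auto
  moreover have "M \<ge> 1"
    using assms(3,4) by simp
  ultimately show ?thesis
    using orbit_sum_fejer_prod[OF assms(1,2) \<open>M \<ge> 1\<close>, of "(\<lambda>_. 1)(i := L)" N x] assms(3,4)
    by fastforce
qed

lemma orbit_sum_pos_imp:
  assumes "orbit_sum f N x \<alpha> > 0"
  obtains n where "1 \<le> n" "n < 2 * N" "f (x + real n *\<^sub>R \<alpha>) > 0"
proof -
  have "\<not> (\<forall>j<N. \<forall>j'<N. f (x + real (j + j' + 1) *\<^sub>R \<alpha>) \<le> 0)"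
  proof
    assume "\<forall>j<N. \<forall>j'<N. f (x + real (j + j' + 1) *\<^sub>R \<alpha>) \<le> 0"
    then have "orbit_sum f N x \<alpha> \<le> 0"
      unfolding orbit_sum_def by (intro sum_nonpos) auto
    then show False
      using assms by simp
  qed
  then obtain j j' where "j < N" "j' < N" "f (x + real (j + j' + 1) *\<^sub>R \<alpha>) > 0"
    by (auto simp: not_le)
  then show ?thesis
    using that[of "j + j' + 1"] by simp
qed

lemma orbit_sum_ge_visits:
  assumes "\<And>z. f z \<ge> 0"
  shows "real T * (\<Sum>m\<in>{1..T}. f (y + real m *\<^sub>R \<alpha>)) \<le> orbit_sum f (2 * T) (y - real T *\<^sub>R \<alpha>) \<alpha>"
proof -
  define y' where "y' = y - real T *\<^sub>R \<alpha>"
  have row: "(\<Sum>m\<in>{1..T}. f (y + real m *\<^sub>R \<alpha>)) \<le> (\<Sum>j'<2 * T. f (y' + real (j + j' + 1) *\<^sub>R \<alpha>))"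
    if "j < T" for j
  proof -
    define h where "h m = m + T - j - 1" for m
    have "inj_on h {1..T}"
      using that by (auto simp: h_def inj_on_def)
    moreover have "y' + real (j + h m + 1) *\<^sub>R \<alpha> = y + real m *\<^sub>R \<alpha>" if "m \<in> {1..T}" for m
    proof -
      have "j + h m + 1 = m + T"
        using that \<open>j < T\<close> by (auto simp: h_def)
      then show ?thesis
        by (simp add: y'_def algebra_simps)
    qed
    ultimately have "(\<Sum>m\<in>{1..T}. f (y + real m *\<^sub>R \<alpha>)) = (\<Sum>j'\<in>h ` {1..T}. f (y' + real (j + j' + 1) *\<^sub>R \<alpha>))"
      by (simp add: sum.reindex)
    also have "\<dots> \<le> (\<Sum>j'<2 * T. f (y' + real (j + j' + 1) *\<^sub>R \<alpha>))"
      using that assms by (intro sum_mono2) (auto simp: h_def)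
    finally show ?thesis .
  qed
  have "real T * (\<Sum>m\<in>{1..T}. f (y + real m *\<^sub>R \<alpha>)) = (\<Sum>j<T. \<Sum>m\<in>{1..T}. f (y + real m *\<^sub>R \<alpha>))"
    by simp
  also have "\<dots> \<le> (\<Sum>j<T. \<Sum>j'<2 * T. f (y' + real (j + j' + 1) *\<^sub>R \<alpha>))"
    using row by (intro sum_mono) auto
  also have "\<dots> \<le> orbit_sum f (2 * T) y' \<alpha>"
    unfolding orbit_sum_def using assms by (intro sum_mono2) (auto intro: sum_nonneg)
  finally show ?thesis
    by (simp add: y'_def)
qed

section \<open>An effective Kronecker theorem\<close>

text \<open>The test function behind the effective Kronecker theorem: the factor
  \<open>1 - 4/3 \<cdot> \<Sum>\<^sub>i (1 - fejer L (y\<^sub>i) / L)\<close> is non-positive as soon as one coordinate is far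
  from \<open>\<int>\<close>, while the orbit averages of \<open>fejer_prod\<close> make its orbit sums positive.\<close>
definition hit_test :: "nat \<Rightarrow> nat \<Rightarrow> real^'d::finite \<Rightarrow> real" where
  "hit_test M L y = fejer_prod M (\<lambda>_. 1) y * (1 - 4/3 * (\<Sum>i\<in>UNIV. 1 - fejer L (y$i) / real L))"

lemma hit_test_nonpos:
  assumes "r > 0" "2 / r \<le> real L" "r \<le> dist_Z (y$i0)"
  shows "hit_test M L y \<le> 0"
proof -
  have "real L > 0"
    using assms(1,2) by (smt (verit) divide_pos_pos)
  have "1 - fejer L (y$i) / real L \<ge> 0" for i
    using fejer_le[of L "y$i"] \<open>real L > 0\<close> by (simp add: divide_le_eq)
  then have "1 - fejer L (y$i0) / real L \<le> (\<Sum>i\<in>UNIV. 1 - fejer L (y$i) / real L)"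
    by (intro member_le_sum) auto
  moreover have "fejer L (y$i0) / real L \<le> 1 / (real L * real L * r^2)"
  proof -
    have "fejer L (y$i0) \<le> 1 / (real L * dist_Z (y$i0) ^ 2)"
      using assms \<open>real L > 0\<close> by (intro fejer_le_inverse_dist_Z) auto
    also have "\<dots> \<le> 1 / (real L * r^2)"
      using assms \<open>real L > 0\<close> by (intro divide_left_mono mult_left_mono power_mono mult_pos_pos) auto
    finally have "fejer L (y$i0) / real L \<le> 1 / (real L * r^2) / real L"
      using \<open>real L > 0\<close> by (intro divide_right_mono) auto
    also have "\<dots> = 1 / (real L * real L * r^2)"
      by simp
    finally show ?thesis .
  qed
  moreover have "1 / (real L * real L * r^2) \<le> 1/4"
  proof -
    have "2 \<le> real L * r"
      using assms(1,2) by (simp add: divide_le_eq mult.commute)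
    then have "2^2 \<le> (real L * r)^2"
      by (intro power_mono) auto
    then show ?thesis
      by (simp add: power_mult_distrib power2_eq_square mult_ac divide_simps)
  qed
  ultimately have "1 - 4/3 * (\<Sum>i\<in>UNIV. 1 - fejer L (y$i) / real L) \<le> 0"
    by linarith
  then show ?thesis
    unfolding hit_test_def using fejer_prod_nonneg by (rule mult_nonneg_nonpos[rotated])
qed

lemma hit_test_eq:
  "hit_test M L (y :: real^'d::finite) =
     (1 - 4 * real CARD('d) / 3) * fejer_prod M (\<lambda>_. 1) y
       + 4/3 * (\<Sum>i\<in>UNIV. fejer_prod M ((\<lambda>_. 1)(i := L)) y)"
proof -
  define G where "G = fejer_prod M (\<lambda>_. 1) y"
  define s where "s = (\<Sum>i\<in>UNIV. fejer L (y$i) / real L)"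
  have H: "(\<Sum>i\<in>UNIV. fejer_prod M ((\<lambda>_. 1)(i := L)) y) = G * s"
    by (simp only: fejer_prod_upd G_def s_def sum_distrib_left)
  have S: "(\<Sum>i\<in>UNIV. 1 - fejer L (y$i) / real L) = real CARD('d) - s"
    by (simp add: sum_subtractf s_def)
  show ?thesis
    unfolding hit_test_def G_def[symmetric] H S by (simp add: field_simps)
qed

lemma orbit_sum_hit_test_ge:
  fixes \<alpha> :: "real^'d::finite"
  assumes "badly_approximable_with c \<alpha>" "c > 0" "L \<ge> 1" "2 * L \<le> M"
  defines "E \<equiv> 4 * (4 * real CARD('d) * real M) ^ (2 * CARD('d)) / c^2"
  shows "real N ^ 2 * (1 - 8 * real CARD('d) * real L / (3 * real M)) - 8 * real CARD('d) / 3 * E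
           \<le> orbit_sum (hit_test M L) N x \<alpha>"
proof -
  define d where "d = real CARD('d)"
  have "d \<ge> 1" "E \<ge> 0"
    by (simp_all add: d_def E_def Suc_le_eq)
  have "orbit_sum (fejer_prod M (\<lambda>_. 1)) N x \<alpha> \<le> real N ^ 2 + E"
    using orbit_sum_fejer_prod_const_le[OF assms(1,2)] assms(3,4) unfolding E_def by simp
  then have G: "(1 - 4 * d / 3) * (real N ^ 2 + E) \<le> (1 - 4 * d / 3) * orbit_sum (fejer_prod M (\<lambda>_. 1)) N x \<alpha>"
    using \<open>d \<ge> 1\<close> by (intro mult_left_mono_neg) auto
  have "(\<Sum>i\<in>(UNIV::'d set). real N ^ 2 * (1 - 2 * real L / real M) - E)
      \<le> (\<Sum>i\<in>UNIV. orbit_sum (fejer_prod M ((\<lambda>_. 1)(i := L))) N x \<alpha>)"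
    unfolding E_def using assms(1-4) by (intro sum_mono orbit_sum_fejer_prod_upd_ge)
  then have H: "d * (real N ^ 2 * (1 - 2 * real L / real M) - E)
      \<le> (\<Sum>i\<in>UNIV. orbit_sum (fejer_prod M ((\<lambda>_. 1)(i := L))) N x \<alpha>)"
    by (simp add: d_def)
  have "orbit_sum (hit_test M L) N x \<alpha> = (1 - 4 * d / 3) * orbit_sum (fejer_prod M (\<lambda>_. 1)) N x \<alpha>
      + 4/3 * (\<Sum>i\<in>UNIV. orbit_sum (fejer_prod M ((\<lambda>_. 1)(i := L))) N x \<alpha>)"
    unfolding hit_test_eq[abs_def] orbit_sum_add orbit_sum_cmult orbit_sum_sum d_def ..
  moreover have "real N ^ 2 * (1 - 8 * d * real L / (3 * real M)) - 8 * d / 3 * E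
      \<le> (1 - 4 * d / 3) * (real N ^ 2 + E) + 4/3 * (d * (real N ^ 2 * (1 - 2 * real L / real M) - E))"
    using \<open>E \<ge> 0\<close> by (simp add: algebra_simps)
  ultimately show ?thesis
    using G H unfolding d_def by linarith
qed

lemma orbit_point_near_lattice:
  fixes \<alpha> x :: "real^'d::finite"
  assumes "badly_approximable_with c \<alpha>" "c > 0" "r > 0" "2 / r \<le> real L" "M = 6 * CARD('d) * L"
    "24/5 * real CARD('d) * (4 * (4 * real CARD('d) * real M) ^ (2 * CARD('d)) / c^2) < real N ^ 2"
  obtains n where "1 \<le> n" "n < 2 * N" "\<forall>i. dist_Z ((x + real n *\<^sub>R \<alpha>)$i) < r"
proof -
  have "real L > 0"
    using assms(3,4) by (smt (verit) divide_pos_pos)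
  then have "L \<ge> 1" "2 * L \<le> M"
    using assms(5) by (simp_all add: Suc_le_eq)
  moreover have "real N ^ 2 * (1 - 8 * real CARD('d) * real L / (3 * real M)) = 5/9 * real N ^ 2"
    using \<open>real L > 0\<close> assms(5) by (simp add: field_simps)
  ultimately have "orbit_sum (hit_test M L) N x \<alpha> > 0"
    using orbit_sum_hit_test_ge[OF assms(1,2), of L M N x] assms(6) by linarith
  then obtain n where "1 \<le> n" "n < 2 * N" "hit_test M L (x + real n *\<^sub>R \<alpha>) > 0"
    by (rule orbit_sum_pos_imp)
  then show ?thesis
    using that hit_test_nonpos[OF assms(3,4)] by (meson not_le)
qed

lemma effective_kronecker:
  fixes \<alpha> x :: "real^'d::finite"
  assumes "badly_approximable_with c \<alpha>" "c > 0" "0 < r" "r \<le> 1"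
  obtains n where "1 \<le> n"
    "real n \<le> (10 * real CARD('d) * (72 * real CARD('d)^2) ^ CARD('d) / c + 2) / r ^ CARD('d)"
    "\<forall>i. dist_Z ((x + real n *\<^sub>R \<alpha>)$i) < r"
proof -
  define d where "d = CARD('d)"
  define L where "L = nat \<lceil>2 / r\<rceil>"
  define M where "M = 6 * d * L"
  define B where "B = 5 * real d * (72 * real d^2) ^ d / c"
  define N where "N = nat \<lceil>B / r^d\<rceil>"
  define X where "X = (72 * real d ^ 2) ^ (2 * d) / (c^2 * r^(2 * d))"
  have "d \<ge> 1" "X > 0" "B > 0"
    using assms(2,3) by (simp_all add: d_def X_def B_def Suc_le_eq)
  have L: "2 / r \<le> real L" "real L \<le> 3 / r"
    using real_nat_ceiling_ge[of "2 / r"] real_nat_ceiling_le[of "2 / r"] assms(3,4)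
    by (simp_all add: L_def field_simps)
  have N: "B / r^d \<le> real N" "real N \<le> B / r^d + 1"
    using real_nat_ceiling_ge[of "B / r^d"] real_nat_ceiling_le[of "B / r^d"] \<open>B > 0\<close> assms(3)
    by (simp_all add: N_def)
  have "24/5 * real d * (4 * (4 * real d * real M) ^ (2 * d) / c^2) \<le> 24/5 * real d * (4 * X)"
  proof -
    have "4 * real d * real M = 24 * real d ^ 2 * real L"
      by (simp add: M_def power2_eq_square)
    also have "\<dots> \<le> 24 * real d ^ 2 * (3 / r)"
      using L(2) by (intro mult_left_mono) auto
    finally have "(4 * real d * real M) ^ (2 * d) \<le> (72 * real d ^ 2 / r) ^ (2 * d)"
      by (intro power_mono) auto
    then have "4 * (4 * real d * real M) ^ (2 * d) / c^2 \<le> 4 * X"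
      using assms(2) by (simp add: X_def power_divide field_simps)
    then show ?thesis
      by (intro mult_left_mono) auto
  qed
  moreover have "(B / r^d)^2 \<le> real N ^ 2"
    using N(1) \<open>B > 0\<close> assms(3) by (intro power_mono) auto
  moreover have "(B / r^d)^2 = 25 * real d ^ 2 * X"
    by (simp add: B_def X_def power_divide power_mult_distrib power_mult[symmetric] mult.commute)
  moreover have "24/5 * real d * (4 * X) < 25 * real d ^ 2 * X"
    using \<open>d \<ge> 1\<close> \<open>X > 0\<close> by (simp add: power2_eq_square)
  ultimately have "24/5 * real d * (4 * (4 * real d * real M) ^ (2 * d) / c^2) < real N ^ 2"
    by linarith
  then obtain n where n: "1 \<le> n" "n < 2 * N" "\<forall>i. dist_Z ((x + real n *\<^sub>R \<alpha>)$i) < r"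
    using orbit_point_near_lattice[OF assms(1-3) L(1), of M N x] unfolding M_def d_def by blast
  moreover have "real n \<le> (2 * B + 2) / r ^ d"
  proof -
    have "r ^ d \<le> 1"
      using assms(3,4) by (simp add: power_le_one)
    then have "2 \<le> 2 / r ^ d"
      using assms(3) by (simp add: divide_simps)
    moreover have "real n \<le> 2 * real N"
      using n(2) by simp
    ultimately have "real n \<le> 2 * (B / r^d) + 2 / r^d"
      using N(2) by linarith
    then show ?thesis
      by (simp add: add_divide_distrib)
  qed
  then show ?thesis
    using that n(1,3) unfolding B_def d_def by (simp add: mult_ac)
qed

section \<open>Counting near-returns to the lattice\<close>

lemma card_visits_le_orbit_sum_fejer_prod:
  fixes \<alpha> y :: "real^'d::finite"
  assumes "M \<ge> 1" "r \<le> 1 / (8 * real M)"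
  shows "real T * (real (card {m\<in>{1..T}. \<forall>i. dist_Z ((y + real m *\<^sub>R \<alpha>)$i) \<le> r}) * (real M / 2) ^ CARD('d))
           \<le> orbit_sum (fejer_prod M (\<lambda>_. 1)) (2 * T) (y - real T *\<^sub>R \<alpha>) \<alpha>"
proof -
  define S where "S = {m\<in>{1..T}. \<forall>i. dist_Z ((y + real m *\<^sub>R \<alpha>)$i) \<le> r}"
  define G where "G = fejer_prod M (\<lambda>_::'d. 1)"
  have "real (card S) * (real M / 2) ^ CARD('d) = (\<Sum>m\<in>S. (real M / 2) ^ CARD('d))"
    by simp
  also have "\<dots> \<le> (\<Sum>m\<in>S. G (y + real m *\<^sub>R \<alpha>))"
  proof (intro sum_mono)
    fix m
    assume "m \<in> S"
    then have "dist_Z ((y + real m *\<^sub>R \<alpha>)$i) \<le> 1 / (8 * real M)" for i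
      using assms(2) by (auto simp: S_def intro: order_trans)
    then show "(real M / 2) ^ CARD('d) \<le> G (y + real m *\<^sub>R \<alpha>)"
      unfolding G_def using assms(1) by (intro fejer_prod_ge) auto
  qed
  also have "\<dots> \<le> (\<Sum>m\<in>{1..T}. G (y + real m *\<^sub>R \<alpha>))"
    by (intro sum_mono2) (auto simp: S_def G_def fejer_prod_nonneg)
  finally have "real T * (real (card S) * (real M / 2) ^ CARD('d)) \<le> real T * (\<Sum>m\<in>{1..T}. G (y + real m *\<^sub>R \<alpha>))"
    by (rule mult_left_mono) simp
  also have "\<dots> \<le> orbit_sum G (2 * T) (y - real T *\<^sub>R \<alpha>) \<alpha>"
    by (rule orbit_sum_ge_visits) (simp add: G_def fejer_prod_nonneg)
  finally show ?thesis
    by (simp add: S_def G_def)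
qed

lemma fejer_orbit_error_le:
  assumes "real M ^ d \<le> real T"
  shows "4 * (4 * real d * real M) ^ (2 * d) / c^2 \<le> real T * (real M / 2) ^ d * (4 * (4 * real d) ^ (2 * d) * 2 ^ d / c^2)"
proof -
  have "4 * (4 * real d) ^ (2 * d) * (real M ^ d * real M ^ d) / c^2
      \<le> 4 * (4 * real d) ^ (2 * d) * (real M ^ d * real T) / c^2"
    using assms by (intro divide_right_mono mult_left_mono) auto
  moreover have "4 * (4 * real d * real M) ^ (2 * d) / c^2 = 4 * (4 * real d) ^ (2 * d) * (real M ^ d * real M ^ d) / c^2"
    by (simp add: power_mult_distrib power_add[symmetric] mult_2)
  moreover have "real T * (real M / 2) ^ d * (4 * (4 * real d) ^ (2 * d) * 2 ^ d / c^2)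
      = 4 * (4 * real d) ^ (2 * d) * (real M ^ d * real T) / c^2"
    by (simp add: power_divide)
  ultimately show ?thesis
    by linarith
qed

text \<open>With \<open>M \<approx> 1/(8r)\<close>, the orbit sum of \<open>fejer_prod M (\<lambda>_. 1)\<close> over \<open>2T\<close> steps is at least
  \<open>T (M/2)\<^sup>d\<close> times the number of visits, and at most \<open>4T\<^sup>2\<close> plus an error that is
  \<open>O(T M\<^sup>d)\<close> once \<open>T \<ge> M\<^sup>d\<close>.\<close>
lemma card_visits_le_long_orbit:
  fixes \<alpha> y :: "real^'d::finite"
  assumes "badly_approximable_with c \<alpha>" "c > 0" "0 < r" "r \<le> 1/16" "1 \<le> real T * (8 * r) ^ CARD('d)"
  shows "real (card {m\<in>{1..T}. \<forall>i. dist_Z ((y + real m *\<^sub>R \<alpha>)$i) \<le> r})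
     \<le> 4 * 32 ^ CARD('d) * real T * r ^ CARD('d) + 4 * (4 * real CARD('d)) ^ (2 * CARD('d)) * 2 ^ CARD('d) / c^2"
proof -
  define d where "d = CARD('d)"
  define S where "S = {m\<in>{1..T}. \<forall>i. dist_Z ((y + real m *\<^sub>R \<alpha>)$i) \<le> r}"
  define M where "M = nat \<lfloor>1 / (8 * r)\<rfloor>"
  define E where "E = 4 * (4 * real d * real M) ^ (2 * d) / c^2"
  define K where "K = real T * (real M / 2) ^ d"
  define C where "C = 4 * (4 * real d) ^ (2 * d) * 2 ^ d / c^2"
  have "2 \<le> 1 / (8 * r)"
    using assms(3,4) by (simp add: field_simps)
  then have M: "1 / (16 * r) \<le> real M" "real M \<le> 1 / (8 * r)"
    unfolding M_def using real_nat_floor_ge[of "1 / (8 * r)"] of_nat_floor[of "1 / (8 * r)"] assms(3)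
    by simp_all
  moreover have "1 \<le> 1 / (16 * r)"
    using assms(3,4) by (simp add: field_simps)
  ultimately have "M \<ge> 1"
    by simp
  have "T \<ge> 1"
    using assms(5) by (cases T) auto
  have "r \<le> 1 / (8 * real M)"
    using M(2) \<open>M \<ge> 1\<close> assms(3) by (simp add: field_simps)
  then have "K * real (card S) \<le> orbit_sum (fejer_prod M (\<lambda>_. 1)) (2 * T) (y - real T *\<^sub>R \<alpha>) \<alpha>"
    using card_visits_le_orbit_sum_fejer_prod[OF \<open>M \<ge> 1\<close>, of r T y \<alpha>]
    by (simp add: K_def S_def d_def mult_ac)
  moreover have "orbit_sum (fejer_prod M (\<lambda>_. 1)) (2 * T) (y - real T *\<^sub>R \<alpha>) \<alpha> \<le> 4 * real T ^ 2 + E"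
    using orbit_sum_fejer_prod_const_le[OF assms(1,2) \<open>M \<ge> 1\<close>, of "2 * T"]
    by (simp add: E_def d_def power2_eq_square)
  moreover have "4 * real T ^ 2 \<le> K * (4 * 32 ^ d * real T * r ^ d)"
  proof -
    have "1 \<le> 16 * real M * r"
      using M(1) assms(3) by (simp add: field_simps)
    then have "1 \<le> (16 * real M * r) ^ d"
      by (rule one_le_power)
    also have "16 * real M * r = (real M / 2) * 32 * r"
      by simp
    also have "((real M / 2) * 32 * r) ^ d = (real M / 2) ^ d * 32 ^ d * r ^ d"
      by (simp only: power_mult_distrib)
    finally have "4 * real T ^ 2 * 1 \<le> 4 * real T ^ 2 * ((real M / 2) ^ d * 32 ^ d * r ^ d)"
      by (intro mult_left_mono) auto
    also have "\<dots> = K * (4 * 32 ^ d * real T * r ^ d)"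
      unfolding K_def power2_eq_square by (simp only: mult_ac)
    finally show ?thesis
      by simp
  qed
  moreover have "E \<le> K * C"
  proof -
    have "real M ^ d \<le> (1 / (8 * r)) ^ d"
      using M by (intro power_mono) auto
    also have "\<dots> \<le> real T"
      using assms(3,5) by (simp add: d_def power_one_over divide_le_eq)
    finally show ?thesis
      unfolding E_def K_def C_def by (rule fejer_orbit_error_le)
  qed
  ultimately have "K * real (card S) \<le> K * (4 * 32 ^ d * real T * r ^ d + C)"
    by (simp add: K_def algebra_simps)
  moreover have "K > 0"
    using \<open>M \<ge> 1\<close> \<open>T \<ge> 1\<close> by (simp add: K_def)
  ultimately show ?thesis
    by (simp add: S_def C_def d_def)
qed

lemma card_visits_le_small_radius:
  fixes \<alpha> y :: "real^'d::finite"
  assumes "badly_approximable_with c \<alpha>" "c > 0" "0 < r" "r \<le> 1/16"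
  shows "real (card {m\<in>{1..T}. \<forall>i. dist_Z ((y + real m *\<^sub>R \<alpha>)$i) \<le> r})
     \<le> 4 * 32 ^ CARD('d) * (real T * r ^ CARD('d) + 1) + 4 * (4 * real CARD('d)) ^ (2 * CARD('d)) * 2 ^ CARD('d) / c^2"
    (is "real (card (?S T)) \<le> ?A * (real T * r ^ ?d + 1) + ?C")
proof -
  define T' where "T' = max T (nat \<lceil>1 / (8 * r) ^ ?d\<rceil>)"
  have "0 \<le> 1 / (8 * r) ^ ?d"
    using assms(3) by simp
  moreover have "real T' = max (real T) (real (nat \<lceil>1 / (8 * r) ^ ?d\<rceil>))"
    by (simp only: T'_def of_nat_max)
  ultimately have T': "1 / (8 * r) ^ ?d \<le> real T'" "real T' \<le> real T + (1 / (8 * r) ^ ?d + 1)"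
    using real_nat_ceiling_ge[of "1 / (8 * r) ^ ?d"] real_nat_ceiling_le[of "1 / (8 * r) ^ ?d"]
    by linarith+
  have "card (?S T) \<le> card (?S T')"
    by (intro card_mono) (auto simp: T'_def)
  then have "real (card (?S T)) \<le> ?A * real T' * r ^ ?d + ?C"
    using card_visits_le_long_orbit[OF assms, of T' y] T'(1) assms(3)
    by (simp add: divide_le_eq mult.commute)
  also have "?A * real T' * r ^ ?d \<le> ?A * ((real T + (1 / (8 * r) ^ ?d + 1)) * r ^ ?d)"
    using T'(2) assms(3) by (simp add: mult.assoc mult_right_mono)
  also have "(real T + (1 / (8 * r) ^ ?d + 1)) * r ^ ?d = real T * r ^ ?d + (1 / 8 ^ ?d + r ^ ?d)"
    using assms(3) by (simp add: field_simps power_mult_distrib)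
  also have "1 / 8 ^ ?d + r ^ ?d \<le> (1::real)"
  proof -
    have "r ^ ?d \<le> r"
      using power_decreasing[of 1 ?d r] assms(3,4) by (simp add: Suc_le_eq)
    moreover have "(8::real) ^ 1 \<le> 8 ^ ?d"
      by (intro power_increasing) (auto simp: Suc_le_eq)
    then have "1 / (8::real) ^ ?d \<le> 1 / 8"
      by (intro divide_left_mono) auto
    ultimately show ?thesis
      using assms(4) by linarith
  qed
  finally show ?thesis
    by simp
qed

lemma card_visits_le:
  fixes \<alpha> y :: "real^'d::finite"
  assumes "badly_approximable_with c \<alpha>" "c > 0" "0 < r"
  shows "real (card {m\<in>{1..T}. \<forall>i. dist_Z ((y + real m *\<^sub>R \<alpha>)$i) \<le> r})
     \<le> 4 * 32 ^ CARD('d) * (real T * r ^ CARD('d) + 1) + 4 * (4 * real CARD('d)) ^ (2 * CARD('d)) * 2 ^ CARD('d) / c^2"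
    (is "real (card (?S T)) \<le> ?A * (real T * r ^ ?d + 1) + ?C")
proof (cases "r \<le> 1/16")
  case True
  then show ?thesis
    using card_visits_le_small_radius[OF assms] by blast
next
  case False
  have "card (?S T) \<le> card {1..T}"
    by (intro card_mono) auto
  then have "real (card (?S T)) \<le> real T * 1"
    by simp
  also have "\<dots> \<le> real T * (16 ^ ?d * r ^ ?d)"
  proof -
    have "1 \<le> (16 * r) ^ ?d"
      using False by (intro one_le_power) simp
    then show ?thesis
      by (intro mult_left_mono) (simp_all add: power_mult_distrib)
  qed
  also have "\<dots> \<le> real T * (?A * r ^ ?d)"
  proof -
    have "(16::real) ^ ?d \<le> 32 ^ ?d"
      by (intro power_mono) auto
    moreover have "(0::real) \<le> 32 ^ ?d"
      by simp
    ultimately have "(16::real) ^ ?d \<le> ?A"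
      by linarith
    then show ?thesis
      using assms(3) by (intro mult_left_mono mult_right_mono) auto
  qed
  also have "\<dots> \<le> ?A * (real T * r ^ ?d + 1)"
    by (simp add: algebra_simps)
  moreover have "0 \<le> ?C"
    by simp
  ultimately show ?thesis
    by linarith
qed

section \<open>Return times\<close>

abbreviation plus_int_lattice :: "(real^'d) set \<Rightarrow> (real^'d) set" where
  "plus_int_lattice S \<equiv> {x + z | x z. x \<in> S \<and> z \<in> int_lattice}"

lemma return_time_le:
  assumes "1 \<le> n" "q + real n *\<^sub>R \<alpha> \<in> plus_int_lattice S"
  shows "return_time \<alpha> S q \<le> n" "1 \<le> return_time \<alpha> S q"
    "q + real (return_time \<alpha> S q) *\<^sub>R \<alpha> \<in> plus_int_lattice S"
proof -
  let ?P = "\<lambda>n::nat. n \<ge> 1 \<and> q + of_nat n *\<^sub>R \<alpha> \<in> plus_int_lattice S"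
  have "?P n"
    using assms by simp
  then show "return_time \<alpha> S q \<le> n"
    unfolding return_time_def by (rule Least_le)
  from \<open>?P n\<close> have "?P (LEAST n. ?P n)"
    by (rule LeastI)
  then show "1 \<le> return_time \<alpha> S q" "q + real (return_time \<alpha> S q) *\<^sub>R \<alpha> \<in> plus_int_lattice S"
    unfolding return_time_def by simp_all
qed

text \<open>Apply the effective Kronecker theorem to \<open>q - p\<close> with precision \<open>s/d\<close> and round to the
  nearest lattice point.\<close>
lemma return_into_ball:
  fixes \<alpha> q :: "real^'d::finite"
  assumes "badly_approximable_with c \<alpha>" "c > 0" "ball p s \<subseteq> S" "0 < s" "s \<le> 1"
  obtains n where "1 \<le> n"
    "real n \<le> (10 * real CARD('d) * (72 * real CARD('d)^2) ^ CARD('d) / c + 2) * (real CARD('d) / s) ^ CARD('d)"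
    "q + real n *\<^sub>R \<alpha> \<in> plus_int_lattice S"
proof -
  define d where "d = real CARD('d)"
  have "d \<ge> 1"
    by (simp add: d_def Suc_le_eq)
  then have r: "0 < s / d" "s / d \<le> 1"
    using assms(4,5) by (auto simp: field_simps)
  obtain n where n: "1 \<le> n"
    "real n \<le> (10 * d * (72 * d^2) ^ CARD('d) / c + 2) / (s / d) ^ CARD('d)"
    "\<forall>i. dist_Z ((q - p + real n *\<^sub>R \<alpha>)$i) < s / d"
    using effective_kronecker[OF assms(1,2) r] unfolding d_def by metis
  define w where "w = q - p + real n *\<^sub>R \<alpha>"
  define z :: "real^'d" where "z = (\<chi> i. of_int (round (w$i)))"
  have "z \<in> int_lattice"
    by (simp add: z_def int_lattice_def)
  have "norm (w - z) \<le> (\<Sum>i\<in>UNIV. \<bar>(w - z)$i\<bar>)"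
    by (rule norm_le_l1_cart)
  also have "\<dots> < (\<Sum>i\<in>(UNIV::'d set). s / d)"
    using n(3) by (intro sum_strict_mono) (auto simp: z_def w_def dist_Z_def)
  also have "\<dots> = s"
    using \<open>d \<ge> 1\<close> by (simp add: d_def)
  finally have "p + (w - z) \<in> ball p s"
    by (simp add: dist_norm norm_minus_commute)
  then have "p + (w - z) \<in> S"
    using assms(3) by blast
  moreover have "q + real n *\<^sub>R \<alpha> = (p + (w - z)) + z"
    by (simp add: w_def)
  ultimately have "q + real n *\<^sub>R \<alpha> \<in> plus_int_lattice S"
    using \<open>z \<in> int_lattice\<close> by blast
  moreover have "(10 * d * (72 * d^2) ^ CARD('d) / c + 2) / (s / d) ^ CARD('d) =
      (10 * d * (72 * d^2) ^ CARD('d) / c + 2) * (d / s) ^ CARD('d)"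
    by (simp add: power_divide)
  ultimately show ?thesis
    using that n(1,2) unfolding d_def by simp
qed

lemma dist_Z_return_le:
  assumes "\<forall>x\<in>S. norm x \<le> b" "q \<in> S" "q + real n *\<^sub>R \<alpha> \<in> plus_int_lattice S"
  shows "dist_Z ((real n *\<^sub>R \<alpha>)$i) \<le> 2 * b"
proof -
  obtain x z where xz: "x \<in> S" "z \<in> int_lattice" "q + real n *\<^sub>R \<alpha> = x + z"
    using assms(3) by blast
  obtain k where "z$i = of_int k"
    using xz(2) by (auto simp: int_lattice_def elim: Ints_cases)
  then have "(real n *\<^sub>R \<alpha>)$i - of_int k = (x - q)$i"
    using arg_cong[OF xz(3), of "\<lambda>v. v$i"] by simp
  then have "dist_Z ((real n *\<^sub>R \<alpha>)$i) \<le> \<bar>(x - q)$i\<bar>"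
    using dist_Z_le by metis
  also have "\<dots> \<le> norm x + norm q"
    using component_le_norm_cart norm_triangle_ineq4 order_trans by blast
  also have "\<dots> \<le> 2 * b"
    using assms(1) assms(2) xz(1) by (smt (verit))
  finally show ?thesis .
qed

definition return_count_bound :: "real \<Rightarrow> nat \<Rightarrow> real \<Rightarrow> real" where
  "return_count_bound c d \<kappa> =
     4 * 32 ^ d * ((10 * real d * (72 * real d^2) ^ d / c + 2) * (2 * real d * \<kappa>) ^ d + 1)
       + 4 * (4 * real d) ^ (2 * d) * 2 ^ d / c^2"

text \<open>All return times lie below the bound of \<open>return_into_ball\<close> and are near-returns of the
  orbit of \<open>0\<close> to the lattice with precision \<open>2b\<close>, so \<open>card_visits_le\<close> bounds their number
  in terms of the ratio \<open>b / s\<close> only.\<close>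
lemma card_return_times_le:
  fixes \<alpha> :: "real^'d::finite"
  assumes "badly_approximable_with c \<alpha>" "c > 0" "ball p s \<subseteq> S" "0 < s" "s \<le> 1"
    "\<forall>x\<in>S. norm x \<le> b" "b > 0"
  shows "finite (return_times \<alpha> S)"
    "real (card (return_times \<alpha> S)) \<le> return_count_bound c CARD('d) (b / s)"
proof -
  define d where "d = CARD('d)"
  define A where "A = 10 * real d * (72 * real d^2) ^ d / c + 2"
  define T where "T = nat \<lfloor>A * (real d / s) ^ d\<rfloor>"
  have "0 \<le> A * (real d / s) ^ d"
    using assms(2,4) by (simp add: A_def)
  then have T: "real T \<le> A * (real d / s) ^ d"
    unfolding T_def by (simp add: of_nat_floor)
  define V where "V = {m\<in>{1..T}. \<forall>i. dist_Z ((0 + real m *\<^sub>R \<alpha>)$i) \<le> 2 * b}"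
  have "return_times \<alpha> S \<subseteq> V"
  proof
    fix m
    assume "m \<in> return_times \<alpha> S"
    then obtain q where q: "q \<in> S" "m = return_time \<alpha> S q"
      by (auto simp: return_times_def)
    obtain n where n: "1 \<le> n" "real n \<le> A * (real d / s) ^ d" "q + real n *\<^sub>R \<alpha> \<in> plus_int_lattice S"
      using return_into_ball[OF assms(1-5), of q] unfolding A_def d_def by blast
    have "real m \<le> A * (real d / s) ^ d"
      using return_time_le(1)[OF n(1,3)] n(2) q(2) by linarith
    then have "m \<le> T"
      unfolding T_def by (rule le_nat_floor)
    moreover have "1 \<le> m" "dist_Z ((real m *\<^sub>R \<alpha>)$i) \<le> 2 * b" for i
      using return_time_le(2,3)[OF n(1,3)] dist_Z_return_le[OF assms(6) q(1)] q(2) by blast+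
    ultimately show "m \<in> V"
      by (simp add: V_def)
  qed
  moreover have "finite V"
    by (simp add: V_def)
  ultimately show "finite (return_times \<alpha> S)"
    by (rule finite_subset)
  have "real (card (return_times \<alpha> S)) \<le> real (card V)"
    using \<open>return_times \<alpha> S \<subseteq> V\<close> \<open>finite V\<close> by (simp add: card_mono)
  also have "\<dots> \<le> 4 * 32 ^ d * (real T * (2 * b) ^ d + 1) + 4 * (4 * real d) ^ (2 * d) * 2 ^ d / c^2"
    unfolding V_def d_def using assms(1,2,7) by (intro card_visits_le) auto
  also have "real T * (2 * b) ^ d \<le> A * (2 * real d * (b / s)) ^ d"
  proof -
    have "real T * (2 * b) ^ d \<le> A * (real d / s) ^ d * (2 * b) ^ d"
      using T assms(7) by (intro mult_right_mono) auto
    also have "\<dots> = A * (2 * real d * (b / s)) ^ d"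
      by (simp add: power_divide power_mult_distrib mult_ac)
    finally show ?thesis .
  qed
  finally show "real (card (return_times \<alpha> S)) \<le> return_count_bound c CARD('d) (b / s)"
    by (simp add: return_count_bound_def A_def d_def)
qed

lemma ball_subset_scaled:
  fixes p :: "'a::real_normed_vector"
  assumes "ball p \<epsilon> \<subseteq> D" "R > 0"
  shows "ball (inverse R *\<^sub>R p) (\<epsilon> / R) \<subseteq> (\<lambda>x. inverse R *\<^sub>R x) ` D"
proof
  fix y
  assume "y \<in> ball (inverse R *\<^sub>R p) (\<epsilon> / R)"
  have "p - R *\<^sub>R y = R *\<^sub>R (inverse R *\<^sub>R p - y)"
    using assms(2) by (simp add: algebra_simps)
  then have "dist p (R *\<^sub>R y) = R * dist (inverse R *\<^sub>R p) y"
    using assms(2) by (simp add: dist_norm)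
  also have "\<dots> < R * (\<epsilon> / R)"
    using \<open>y \<in> ball _ _\<close> assms(2) by (intro mult_strict_left_mono) auto
  finally have "dist p (R *\<^sub>R y) < \<epsilon>"
    using assms(2) by simp
  then have "R *\<^sub>R y \<in> D"
    using assms(1) by auto
  moreover have "y = inverse R *\<^sub>R (R *\<^sub>R y)"
    using assms(2) by simp
  ultimately show "y \<in> (\<lambda>x. inverse R *\<^sub>R x) ` D"
    by blast
qed

lemma card_return_times_scaled_le:
  fixes \<alpha> :: "real^'d::finite"
  assumes "badly_approximable_with c \<alpha>" "c > 0" "ball p \<rho> \<subseteq> D" "0 < \<rho>" "\<rho> \<le> 1"
    "\<forall>x\<in>D. norm x \<le> b" "b > 0" "R \<ge> 1"
  shows "finite (return_times \<alpha> ((\<lambda>x. inverse R *\<^sub>R x) ` D))"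
    "real (card (return_times \<alpha> ((\<lambda>x. inverse R *\<^sub>R x) ` D))) \<le> return_count_bound c CARD('d) (b / \<rho>)"
proof -
  have "ball (inverse R *\<^sub>R p) (\<rho> / R) \<subseteq> (\<lambda>x. inverse R *\<^sub>R x) ` D"
    using assms(3,8) by (intro ball_subset_scaled) auto
  moreover have "\<forall>x\<in>(\<lambda>x. inverse R *\<^sub>R x) ` D. norm x \<le> b / R"
    using assms(6,8) by (auto simp: field_simps)
  moreover have "0 < \<rho> / R" "\<rho> / R \<le> 1" "0 < b / R" "(b / R) / (\<rho> / R) = b / \<rho>"
    using assms(4,5,7,8) by (auto simp: field_simps)
  ultimately show "finite (return_times \<alpha> ((\<lambda>x. inverse R *\<^sub>R x) ` D))"
    "real (card (return_times \<alpha> ((\<lambda>x. inverse R *\<^sub>R x) ` D))) \<le> return_count_bound c CARD('d) (b / \<rho>)"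
    using card_return_times_le[OF assms(1,2)] by metis+
qed

theorem theorem1p6:
  fixes D :: "(real ^ 'd) set" and \<alpha> :: "real ^ 'd"
  assumes "CARD('d) \<ge> 2"
    and "bounded D" and "convex D" and "interior D \<noteq> {}"
    and "badly_approximable \<alpha>"
  shows "\<exists>B::nat. \<forall>R::real. R \<ge> 1 \<longrightarrow>
           finite (return_times \<alpha> ((\<lambda>x. inverse R *\<^sub>R x) ` D)) \<and>
           card (return_times \<alpha> ((\<lambda>x. inverse R *\<^sub>R x) ` D)) \<le> B"
proof -
  obtain c where c: "badly_approximable_with c \<alpha>" "c > 0"
    using assms(5) badly_approximable_iff by blast
  obtain p \<epsilon> where "\<epsilon> > 0" "ball p \<epsilon> \<subseteq> D"
    using assms(4) by (auto simp: mem_interior)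
  then have ball: "ball p (min \<epsilon> 1) \<subseteq> D" "0 < min \<epsilon> 1" "min \<epsilon> 1 \<le> 1"
    by auto
  obtain b where "\<forall>x\<in>D. norm x \<le> b" "b > 0"
    using assms(2) bounded_pos by blast
  define B where "B = return_count_bound c CARD('d) (b / min \<epsilon> 1)"
  have "finite (return_times \<alpha> ((\<lambda>x. inverse R *\<^sub>R x) ` D)) \<and>
      real (card (return_times \<alpha> ((\<lambda>x. inverse R *\<^sub>R x) ` D))) \<le> real (nat \<lceil>B\<rceil>)" if "R \<ge> 1" for R
    using card_return_times_scaled_le[OF c ball \<open>\<forall>x\<in>D. norm x \<le> b\<close> \<open>b > 0\<close> that]
      real_nat_ceiling_ge[of B] unfolding B_def by linarith
  then show ?thesis
    by (meson of_nat_le_iff)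
qed

end
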